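(* Let $M$ be a path-circular matroid and let $e\in E(M)$. Then $M\backslash e$ and $M/e$ are both path-circular matroids.
   Context: Let $G$ be a simple graph. A path of $G$ is written as the ordered list of its (distinct) vertices $u_1,\ldots,u_k$, consecutive ones adjacent; paths with zero vertices ("null paths") and one vertex are allowed. A path-circular collection $\mathcal P$ of $G$ is a collection of (not necessarily distinct) paths of $G$ such that whenever $u_1,\ldots,u_k$ are the vertices in order of a path in $\mathcal P$ and $i\in\{2,\ldots,k-1\}$: (i) $u_i$ has degree $2$ in $G$, and (ii) every path of $\mathcal P$ containing $u_i$ also contains at least one of $u_1,u_k$. If $V(G)=\{v_1,\ldots,v_r\}$, let $N(v_i)=\{p\in\mathcal P: v_i \text{ is a vertex of } p\}$ and let $M(\mathcal P)$ be the transversal matroid on ground set $\mathcal P$ (members of the collection being distinct elements) with presentation $(N(v_1),\ldots,N(v_r))$, i.e. whose independent sets are the sets $\{x_1,\ldots,x_m\}$ of distinct elements for which there are distinct $k_1,\ldots,k_m\in[r]$ with $x_i\in N(v_{k_i})$. A matroid of the form $M(\mathcal P)$ (up to isomorphism) is a path-circular matroid. *)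

theory Defs
  imports Main
begin

type_synonym 'a matroid = "'a set \<times> ('a set \<Rightarrow> bool)"

definition ground :: "'a matroid \<Rightarrow> 'a set" where
  "ground M = fst M"

definition indep :: "'a matroid \<Rightarrow> 'a set \<Rightarrow> bool" where
  "indep M = snd M"

definition mdelete :: "'a matroid \<Rightarrow> 'a \<Rightarrow> 'a matroid" where
  "mdelete M e = (ground M - {e}, \<lambda>X. X \<subseteq> ground M - {e} \<and> indep M X)"

definition mcontract :: "'a matroid \<Rightarrow> 'a \<Rightarrow> 'a matroid" where
  "mcontract M e = (ground M - {e}, \<lambda>X. X \<subseteq> ground M - {e} \<and>
      (if indep M {e} then indep M (insert e X) else indep M X))"

definition matroid_iso :: "'a matroid \<Rightarrow> 'b matroid \<Rightarrow> bool" where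
  "matroid_iso M N = (\<exists>f. bij_betw f (ground M) (ground N) \<and>
      (\<forall>X. indep M X \<longleftrightarrow> X \<subseteq> ground M \<and> indep N (f ` X)))"

definition simple_graph :: "'v set \<Rightarrow> ('v \<Rightarrow> 'v \<Rightarrow> bool) \<Rightarrow> bool" where
  "simple_graph V Adj = (finite V \<and>
      (\<forall>u w. Adj u w \<longrightarrow> u \<in> V \<and> w \<in> V \<and> u \<noteq> w \<and> Adj w u))"

definition degree :: "'v set \<Rightarrow> ('v \<Rightarrow> 'v \<Rightarrow> bool) \<Rightarrow> 'v \<Rightarrow> nat" where
  "degree V Adj u = card {w \<in> V. Adj u w}"

definition is_path :: "'v set \<Rightarrow> ('v \<Rightarrow> 'v \<Rightarrow> bool) \<Rightarrow> 'v list \<Rightarrow> bool" where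
  "is_path V Adj p = (distinct p \<and> set p \<subseteq> V \<and>
      (\<forall>i. Suc i < length p \<longrightarrow> Adj (p ! i) (p ! Suc i)))"

text \<open>A collection of paths, indexed by the finite set P (members are distinct elements),
  the member with index x being the path pth x.\<close>
definition path_circular_collection ::
  "'v set \<Rightarrow> ('v \<Rightarrow> 'v \<Rightarrow> bool) \<Rightarrow> 'i set \<Rightarrow> ('i \<Rightarrow> 'v list) \<Rightarrow> bool" where
  "path_circular_collection V Adj P pth = (finite P \<and>
      (\<forall>x\<in>P. is_path V Adj (pth x)) \<and>
      (\<forall>x\<in>P. \<forall>i. 0 < i \<and> Suc i < length (pth x) \<longrightarrow>
          degree V Adj (pth x ! i) = 2 \<and>
          (\<forall>y\<in>P. pth x ! i \<in> set (pth y) \<longrightarrow>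
              hd (pth x) \<in> set (pth y) \<or> last (pth x) \<in> set (pth y))))"

text \<open>The transversal matroid with presentation (N(v)) for v in V, N(v) = {p | v on p}.\<close>
definition path_transversal :: "'v set \<Rightarrow> 'i set \<Rightarrow> ('i \<Rightarrow> 'v list) \<Rightarrow> 'i matroid" where
  "path_transversal V P pth = (P, \<lambda>X. X \<subseteq> P \<and>
      (\<exists>f. inj_on f X \<and> (\<forall>x\<in>X. f x \<in> V \<and> f x \<in> set (pth x))))"

text \<open>Path-circular matroid: isomorphic to some M(P); vertices and collection indices
  are taken in nat without loss of generality (all finite).\<close>
definition path_circular :: "'a matroid \<Rightarrow> bool" where
  "path_circular M = (\<exists>(V::nat set) Adj (P::nat set) pth.
      simple_graph V Adj \<and> path_circular_collection V Adj P pth \<and>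
      matroid_iso M (path_transversal V P pth))"

end

(* A deletion M(P) \ e is the transversal matroid of the collection P - {e}, and contracting a
   loop is deleting it. So let e be a nonempty path u = u_0 ... u_(n-1) and contract its last edge:
   the end a = u_(n-1) is deleted and its neighbours are joined to b = u_(n-2). Paths through all
   of u lose a; a path through a but not through all of u contains a terminal segment of u (inner
   vertices of u have degree 2, and every path meeting one contains an end of u), and this segment
   is slid back by one position along u. This is again a path-circular collection, and its
   transversal matroid is M(P)/e: a system of distinct representatives of S and e in which e is
   represented by u_f becomes one of S after sliding the representatives u_i, i > f, to u_(i-1).
   Conversely, among the systems of distinct representatives of S in the new collection take one
   using the fewest newly added vertices; an exchange argument shows that it can be slid forward
   along u from the first such vertex on, which frees a vertex of u for e. Finally, deletion and
   contraction commute with matroid isomorphism. *)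

theory Submission
  imports Defs
begin

section \<open>Consecutive vertices of a list\<close>

fun consecutive :: "'v list \<Rightarrow> 'v \<Rightarrow> 'v \<Rightarrow> bool" where
  "consecutive (x # y # zs) v w \<longleftrightarrow> (x = v \<and> y = w) \<or> (x = w \<and> y = v) \<or> consecutive (y # zs) v w"
| "consecutive _ v w \<longleftrightarrow> False"

lemma consecutive_sym: "consecutive p v w \<longleftrightarrow> consecutive p w v"
  by (induction p v w rule: consecutive.induct) auto

lemma consecutive_in_set: "consecutive p v w \<Longrightarrow> v \<in> set p \<and> w \<in> set p"
  by (induction p v w rule: consecutive.induct) auto

lemma consecutive_Cons:
  "consecutive (x # ys) v w \<longleftrightarrow>
     consecutive ys v w \<or> (ys \<noteq> [] \<and> ((x = v \<and> hd ys = w) \<or> (x = w \<and> hd ys = v)))"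
  by (cases ys) auto

lemma consecutive_append:
  "consecutive (xs @ ys) v w \<longleftrightarrow> consecutive xs v w \<or> consecutive ys v w \<or>
     (xs \<noteq> [] \<and> ys \<noteq> [] \<and> ((last xs = v \<and> hd ys = w) \<or> (last xs = w \<and> hd ys = v)))"
proof (induction xs)
  case (Cons x xs)
  then show ?case by (cases xs) (auto simp: consecutive_Cons)
qed simp

lemma consecutive_iff_nth:
  "consecutive p v w \<longleftrightarrow>
     (\<exists>i. Suc i < length p \<and> ((p!i = v \<and> p!Suc i = w) \<or> (p!i = w \<and> p!Suc i = v)))"
proof (induction p v w rule: consecutive.induct)
  case (1 x y zs v w)
  have split: "(\<exists>i. Q i) \<longleftrightarrow> Q 0 \<or> (\<exists>i. Q (Suc i))" for Q :: "nat \<Rightarrow> bool"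
    by (metis not0_implies_Suc)
  show ?case by (subst split) (use 1 in auto)
qed (auto simp: less_Suc_eq)

lemma consecutive_map:
  "consecutive (map f p) v w \<longleftrightarrow> (\<exists>v0 w0. consecutive p v0 w0 \<and> f v0 = v \<and> f w0 = w)"
proof (induction p)
  case (Cons x xs)
  then show ?case by (cases xs) (auto simp: consecutive_Cons)
qed simp

lemma chain_iff_consecutive:
  assumes "\<And>x y. R x y \<Longrightarrow> R y x"
  shows "(\<forall>i. Suc i < length p \<longrightarrow> R (p!i) (p!Suc i)) \<longleftrightarrow> (\<forall>v w. consecutive p v w \<longrightarrow> R v w)"
  using assms unfolding consecutive_iff_nth by metis

lemma consecutive_neq: "distinct p \<Longrightarrow> consecutive p v w \<Longrightarrow> v \<noteq> w"
  unfolding consecutive_iff_nth by (auto simp: nth_eq_iff_index_eq)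

lemma consecutive_nth_cases:
  assumes "distinct p" "k < length p" "consecutive p (p!k) x"
  shows "(0 < k \<and> x = p!(k-1)) \<or> (Suc k < length p \<and> x = p!Suc k)"
proof -
  obtain i where i: "Suc i < length p" "(p!i = p!k \<and> p!Suc i = x) \<or> (p!i = x \<and> p!Suc i = p!k)"
    using assms(3) unfolding consecutive_iff_nth by blast
  show ?thesis
  proof (cases "p!i = p!k")
    case True
    then have "i = k" using assms i nth_eq_iff_index_eq by fastforce
    then show ?thesis using True i by auto
  next
    case False
    then have "Suc i = k" using assms i nth_eq_iff_index_eq by metis
    then show ?thesis using False i by auto
  qed
qed

lemma consecutive_nth_iff:
  assumes "distinct p" "0 < k" "Suc k < length p"
  shows "consecutive p (p!k) x \<longleftrightarrow> x = p!(k-1) \<or> x = p!Suc k"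
proof
  show "consecutive p (p!k) x \<Longrightarrow> x = p!(k-1) \<or> x = p!Suc k"
    using consecutive_nth_cases[OF assms(1)] assms(3) by (meson Suc_lessD)
  have "consecutive p (p!k) (p!(k-1))"
    unfolding consecutive_iff_nth using assms by (intro exI[of _ "k-1"]) auto
  moreover have "consecutive p (p!k) (p!Suc k)"
    unfolding consecutive_iff_nth using assms by (intro exI[of _ k]) auto
  ultimately show "x = p!(k-1) \<or> x = p!Suc k \<Longrightarrow> consecutive p (p!k) x" by blast
qed

lemma consecutive_at_most_two:
  assumes "distinct p" "consecutive p v x" "consecutive p v y" "consecutive p v z"
  shows "x = y \<or> x = z \<or> y = z"
proof -
  obtain k where k: "k < length p" "p!k = v"
    using assms(2) consecutive_in_set by (metis in_set_conv_nth)
  show ?thesis using consecutive_nth_cases[OF assms(1) k(1)] assms k by metis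
qed

lemma consecutive_crossing:
  assumes "v \<in> set p" "v \<in> I" "w \<in> set p" "w \<notin> I"
  shows "\<exists>x y. consecutive p x y \<and> x \<in> I \<and> y \<notin> I"
  using assms
proof (induction p arbitrary: v w)
  case (Cons c zs)
  show ?case
  proof (cases zs)
    case (Cons d zs')
    show ?thesis
    proof (cases "(c \<in> I) = (d \<in> I)")
      case True
      then have "\<exists>x y. consecutive zs x y \<and> x \<in> I \<and> y \<notin> I"
        using Cons.IH[of d w] Cons.IH[of v d] Cons.prems \<open>zs = d # zs'\<close> by (cases "c \<in> I") auto
      then show ?thesis using consecutive_Cons by metis
    qed (use Cons in auto)
  qed (use Cons.prems in auto)
qed simp

definition inner :: "'v list \<Rightarrow> 'v set" where
  "inner p = {v. \<exists>x y. x \<noteq> y \<and> consecutive p v x \<and> consecutive p v y}"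

lemma inner_subset_set: "inner p \<subseteq> set p"
  unfolding inner_def using consecutive_in_set by fastforce

lemma inner_iff_nth:
  assumes "distinct p"
  shows "v \<in> inner p \<longleftrightarrow> (\<exists>k. 0 < k \<and> Suc k < length p \<and> p!k = v)"
proof
  assume "v \<in> inner p"
  then obtain x y where xy: "x \<noteq> y" "consecutive p v x" "consecutive p v y"
    unfolding inner_def by blast
  then obtain k where k: "k < length p" "p!k = v"
    using consecutive_in_set by (metis in_set_conv_nth)
  then show "\<exists>k. 0 < k \<and> Suc k < length p \<and> p!k = v"
    using consecutive_nth_cases[OF assms k(1)] xy by metis
next
  assume "\<exists>k. 0 < k \<and> Suc k < length p \<and> p!k = v"
  then obtain k where k: "0 < k" "Suc k < length p" "p!k = v" by blast
  have "p!(k-1) \<noteq> p!Suc k" using assms k by (simp add: nth_eq_iff_index_eq)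
  then show "v \<in> inner p" unfolding inner_def using consecutive_nth_iff[OF assms k(1,2)] k(3) by blast
qed

lemma inner_neighbours:
  assumes "distinct p" "0 < k" "Suc k < length p"
  shows "{x. consecutive p (p!k) x} = {p!(k-1), p!Suc k}" "card {p!(k-1), p!Suc k} = 2"
  using consecutive_nth_iff[OF assms] apply blast
  using assms by (simp add: nth_eq_iff_index_eq)

lemma not_inner_imp_end:
  assumes "distinct p" "v \<in> set p" "v \<notin> inner p"
  shows "v = hd p \<or> v = last p"
proof -
  obtain k where k: "k < length p" "p!k = v" using assms by (metis in_set_conv_nth)
  then have "k = 0 \<or> k = length p - 1" using inner_iff_nth[OF assms(1)] assms(3) by fastforce
  then show ?thesis using k by (metis hd_conv_nth last_conv_nth list.size(3) not_less_zero)
qed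

lemma hd_not_inner:
  assumes "distinct p"
  shows "hd p \<notin> inner p"
proof
  assume "hd p \<in> inner p"
  then obtain k where k: "0 < k" "Suc k < length p" "p!k = hd p"
    using inner_iff_nth[OF assms] by blast
  then have "p!k = p!0" by (metis hd_conv_nth list.size(3) not_less_zero)
  moreover have "0 < length p" using k by auto
  ultimately show False using k nth_eq_iff_index_eq[OF assms, of k 0] by auto
qed

lemma last_not_inner: "distinct p \<Longrightarrow> last p \<notin> inner p"
proof
  assume p: "distinct p" "last p \<in> inner p"
  then obtain k where k: "0 < k" "Suc k < length p" "p!k = p!(length p - 1)"
    using inner_iff_nth by (metis last_conv_nth list.size(3) not_less_zero)
  moreover have "length p - 1 < length p" using k by auto
  ultimately show False using nth_eq_iff_index_eq[OF p(1), of k "length p - 1"] by auto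
qed

lemma inner_map:
  assumes "inj_on f (set p)"
  shows "inner (map f p) = f ` inner p"
proof
  show "inner (map f p) \<subseteq> f ` inner p"
  proof
    fix v assume "v \<in> inner (map f p)"
    then obtain x y where xy: "x \<noteq> y" "consecutive (map f p) v x" "consecutive (map f p) v y"
      unfolding inner_def by blast
    obtain v0 x0 where 0: "consecutive p v0 x0" "f v0 = v" "f x0 = x" using xy consecutive_map by metis
    obtain v1 y1 where 1: "consecutive p v1 y1" "f v1 = v" "f y1 = y" using xy consecutive_map by metis
    have "v0 = v1" using 0 1 assms consecutive_in_set by (metis inj_onD)
    moreover have "x0 \<noteq> y1" using 0 1 xy(1) by auto
    ultimately have "v0 \<in> inner p" unfolding inner_def using 0 1 xy(1) by blast
    then show "v \<in> f ` inner p" using 0 by auto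
  qed
next
  show "f ` inner p \<subseteq> inner (map f p)"
  proof
    fix v assume "v \<in> f ` inner p"
    then obtain v0 x0 y0 where "x0 \<noteq> y0" "consecutive p v0 x0" "consecutive p v0 y0" "v = f v0"
      unfolding inner_def by blast
    moreover have "f x0 \<noteq> f y0" using calculation assms consecutive_in_set by (metis inj_onD)
    ultimately show "v \<in> inner (map f p)" unfolding inner_def consecutive_map by blast
  qed
qed

lemma consecutive_removeAll:
  assumes "distinct p" "a \<in> set p"
  shows "consecutive (removeAll a p) v w \<longleftrightarrow>
     (consecutive p v w \<and> v \<noteq> a \<and> w \<noteq> a) \<or> (consecutive p v a \<and> consecutive p a w \<and> v \<noteq> w)"
proof -
  obtain xs ys where p: "p = xs @ a # ys" using assms(2) by (metis split_list)
  have a: "a \<notin> set xs" "a \<notin> set ys" and dj: "set xs \<inter> set ys = {}" using assms(1) p by auto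
  have r: "removeAll a p = xs @ ys" using p a by simp
  have d: "xs \<noteq> [] \<Longrightarrow> ys \<noteq> [] \<Longrightarrow> last xs \<noteq> hd ys"
    using dj by (metis disjoint_iff last_in_set hd_in_set)
  have n1: "\<And>x. \<not> consecutive xs x a" "\<And>x. \<not> consecutive ys x a" using a consecutive_in_set by metis+
  have n2: "xs \<noteq> [] \<Longrightarrow> last xs \<noteq> a" "ys \<noteq> [] \<Longrightarrow> hd ys \<noteq> a" using a by auto
  have na: "consecutive xs v w \<or> consecutive ys v w \<Longrightarrow> v \<noteq> a \<and> w \<noteq> a"
    using a consecutive_in_set by metis
  have la: "\<And>v. consecutive p v a \<longleftrightarrow> (xs \<noteq> [] \<and> v = last xs) \<or> (ys \<noteq> [] \<and> v = hd ys)"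
    unfolding p consecutive_append consecutive_Cons using n1 n2 by auto
  have "consecutive p v w \<and> v \<noteq> a \<and> w \<noteq> a \<longleftrightarrow> consecutive xs v w \<or> consecutive ys v w"
    using na unfolding p consecutive_append consecutive_Cons by auto
  moreover have "consecutive p v a \<and> consecutive p a w \<and> v \<noteq> w \<longleftrightarrow>
      xs \<noteq> [] \<and> ys \<noteq> [] \<and> ((last xs = v \<and> hd ys = w) \<or> (last xs = w \<and> hd ys = v))"
    using la[of v] la[of w] d consecutive_sym[of p a w] by auto
  ultimately show ?thesis unfolding r consecutive_append by blast
qed

lemma inner_removeAll:
  assumes "distinct p" "a \<in> set p" "v \<in> inner (removeAll a p)"
  shows "v \<in> inner p" "consecutive p v a \<Longrightarrow> a \<in> inner p"
proof -
  obtain x y where xy: "x \<noteq> y" "consecutive (removeAll a p) v x" "consecutive (removeAll a p) v y"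
    using assms(3) unfolding inner_def by blast
  have X: "(consecutive p v x \<and> v \<noteq> a \<and> x \<noteq> a) \<or> (consecutive p v a \<and> consecutive p a x \<and> v \<noteq> x)"
   and Y: "(consecutive p v y \<and> v \<noteq> a \<and> y \<noteq> a) \<or> (consecutive p v a \<and> consecutive p a y \<and> v \<noteq> y)"
    using xy consecutive_removeAll[OF assms(1,2)] by blast+
  show "v \<in> inner p"
    using X Y xy(1) consecutive_at_most_two[OF assms(1), of a v x y] consecutive_sym[of p v a]
    unfolding inner_def by blast
  show "a \<in> inner p" if va: "consecutive p v a"
  proof -
    have "(consecutive p a x \<and> v \<noteq> x) \<or> (consecutive p a y \<and> v \<noteq> y)"
      using X Y xy(1) consecutive_at_most_two[OF assms(1), of v x y a] va by blast
    moreover have "consecutive p a v" using va consecutive_sym by metis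
    ultimately show ?thesis unfolding inner_def by blast
  qed
qed

lemma matroid_eqI: "ground M = ground N \<Longrightarrow> (\<And>X. indep M X \<longleftrightarrow> indep N X) \<Longrightarrow> M = N"
  unfolding ground_def indep_def by (simp add: prod_eq_iff fun_eq_iff)

lemma ground_mdelete: "ground (mdelete M e) = ground M - {e}"
  unfolding mdelete_def ground_def by simp

lemma indep_mdelete: "indep (mdelete M e) X \<longleftrightarrow> X \<subseteq> ground M - {e} \<and> indep M X"
  unfolding mdelete_def indep_def by simp

lemma ground_mcontract: "ground (mcontract M e) = ground M - {e}"
  unfolding mcontract_def ground_def by simp

lemma indep_mcontract: "indep (mcontract M e) X \<longleftrightarrow>
    X \<subseteq> ground M - {e} \<and> (if indep M {e} then indep M (insert e X) else indep M X)"
  unfolding mcontract_def indep_def by simp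

lemma matroid_iso_trans:
  assumes "matroid_iso M N" "matroid_iso N K"
  shows "matroid_iso M K"
proof -
  obtain f where f: "bij_betw f (ground M) (ground N)" "\<And>X. indep M X \<longleftrightarrow> X \<subseteq> ground M \<and> indep N (f ` X)"
    using assms(1) unfolding matroid_iso_def by blast
  obtain g where g: "bij_betw g (ground N) (ground K)" "\<And>X. indep N X \<longleftrightarrow> X \<subseteq> ground N \<and> indep K (g ` X)"
    using assms(2) unfolding matroid_iso_def by blast
  have "indep M X \<longleftrightarrow> X \<subseteq> ground M \<and> indep K ((g \<circ> f) ` X)" for X
  proof (cases "X \<subseteq> ground M")
    case True
    then have "f ` X \<subseteq> ground N" using bij_betw_imp_surj_on[OF f(1)] by blast
    then show ?thesis using f(2) g(2) True by (simp add: image_comp)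
  qed (use f(2) in simp)
  then show ?thesis unfolding matroid_iso_def using bij_betw_trans[OF f(1) g(1)] by blast
qed

lemma matroid_iso_minors:
  assumes bij: "bij_betw f (ground M) (ground N)"
    and ind: "\<And>X. indep M X \<longleftrightarrow> X \<subseteq> ground M \<and> indep N (f ` X)" and e: "e \<in> ground M"
  shows "matroid_iso (mdelete M e) (mdelete N (f e))" "matroid_iso (mcontract M e) (mcontract N (f e))"
proof -
  have bij': "bij_betw f (ground M - {e}) (ground N - {f e})"
    using bij_betw_DiffI[OF bij, of "{e}" "{f e}"] e bij_betw_apply[OF bij e] by auto
  have sub: "f ` X \<subseteq> ground N - {f e}" if "X \<subseteq> ground M - {e}" for X
    using bij_betw_imp_surj_on[OF bij'] that by blast
  have ind_e: "indep M {e} \<longleftrightarrow> indep N {f e}" using ind[of "{e}"] e by simp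
  have ind_ins: "indep M (insert e X) \<longleftrightarrow> indep N (insert (f e) (f ` X))" if "X \<subseteq> ground M - {e}" for X
    using ind[of "insert e X"] e that by auto
  show "matroid_iso (mdelete M e) (mdelete N (f e))"
    unfolding matroid_iso_def ground_mdelete indep_mdelete
  proof (intro exI[of _ f] conjI allI bij')
    fix X
    show "X \<subseteq> ground M - {e} \<and> indep M X \<longleftrightarrow>
        X \<subseteq> ground M - {e} \<and> f ` X \<subseteq> ground N - {f e} \<and> indep N (f ` X)"
      using sub ind[of X] by blast
  qed
  show "matroid_iso (mcontract M e) (mcontract N (f e))"
    unfolding matroid_iso_def ground_mcontract indep_mcontract
  proof (intro exI[of _ f] conjI allI bij')
    fix X
    show "X \<subseteq> ground M - {e} \<and> (if indep M {e} then indep M (insert e X) else indep M X) \<longleftrightarrow>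
        X \<subseteq> ground M - {e} \<and> f ` X \<subseteq> ground N - {f e} \<and>
        (if indep N {f e} then indep N (insert (f e) (f ` X)) else indep N (f ` X))"
      using sub ind[of X] ind_e ind_ins[of X] by auto
  qed
qed

lemma path_circular_iso: "matroid_iso M N \<Longrightarrow> path_circular N \<Longrightarrow> path_circular M"
  unfolding path_circular_def using matroid_iso_trans by blast

definition is_sdr :: "'v set \<Rightarrow> ('i \<Rightarrow> 'v list) \<Rightarrow> 'i set \<Rightarrow> ('i \<Rightarrow> 'v) \<Rightarrow> bool" where
  "is_sdr V pth X f \<longleftrightarrow> inj_on f X \<and> (\<forall>x\<in>X. f x \<in> V \<and> f x \<in> set (pth x))"

lemma indep_path_transversal:
  "indep (path_transversal V P pth) X \<longleftrightarrow> X \<subseteq> P \<and> (\<exists>f. is_sdr V pth X f)"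
  unfolding indep_def path_transversal_def is_sdr_def by simp

lemma ground_path_transversal: "ground (path_transversal V P pth) = P"
  unfolding ground_def path_transversal_def by simp

lemma mdelete_path_transversal: "mdelete (path_transversal V P pth) e = path_transversal V (P - {e}) pth"
  by (rule matroid_eqI)
    (auto simp: ground_mdelete indep_mdelete ground_path_transversal indep_path_transversal)

lemma path_circular_collection_subset:
  assumes "path_circular_collection V Adj P pth" "Q \<subseteq> P"
  shows "path_circular_collection V Adj Q pth"
  using assms unfolding path_circular_collection_def by (meson finite_subset subsetD)

section \<open>Path-circular collections\<close>

locale path_system =
  fixes V :: "'v set" and Adj :: "'v \<Rightarrow> 'v \<Rightarrow> bool" and P :: "'i set" and pth :: "'i \<Rightarrow> 'v list"
  assumes simple: "simple_graph V Adj"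
    and collection: "path_circular_collection V Adj P pth"
begin

lemma finite_V: "finite V"
  using simple unfolding simple_graph_def by blast

lemma adj_in_V: "Adj v w \<Longrightarrow> v \<in> V \<and> w \<in> V \<and> v \<noteq> w"
  using simple unfolding simple_graph_def by blast

lemma adj_sym: "Adj v w \<Longrightarrow> Adj w v"
  using simple unfolding simple_graph_def by blast

lemma finite_P: "finite P"
  using collection unfolding path_circular_collection_def by blast

lemma is_path: "x \<in> P \<Longrightarrow> is_path V Adj (pth x)"
  using collection unfolding path_circular_collection_def by blast

lemma distinct_path: "x \<in> P \<Longrightarrow> distinct (pth x)"
  using is_path unfolding is_path_def by blast

lemma path_subset_V: "x \<in> P \<Longrightarrow> set (pth x) \<subseteq> V"
  using is_path unfolding is_path_def by blast

lemma consecutive_adj: "x \<in> P \<Longrightarrow> consecutive (pth x) v w \<Longrightarrow> Adj v w"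
  using is_path chain_iff_consecutive[of Adj "pth x", OF adj_sym] unfolding is_path_def by blast

lemma inner_degree_shared:
  assumes x: "x \<in> P" and v: "v \<in> inner (pth x)"
  shows "degree V Adj v = 2"
    and "\<And>y. y \<in> P \<Longrightarrow> v \<in> set (pth y) \<Longrightarrow> hd (pth x) \<in> set (pth y) \<or> last (pth x) \<in> set (pth y)"
proof -
  obtain k where "0 < k" "Suc k < length (pth x)" "pth x!k = v"
    using inner_iff_nth[OF distinct_path[OF x]] v by blast
  with x collection show "degree V Adj v = 2"
    and "\<And>y. y \<in> P \<Longrightarrow> v \<in> set (pth y) \<Longrightarrow> hd (pth x) \<in> set (pth y) \<or> last (pth x) \<in> set (pth y)"
    unfolding path_circular_collection_def by blast+
qed

lemma adj_inner_iff_consecutive: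
  assumes x: "x \<in> P" and v: "v \<in> inner (pth x)"
  shows "Adj v w \<longleftrightarrow> consecutive (pth x) v w"
proof -
  let ?p = "pth x"
  obtain k where k: "0 < k" "Suc k < length ?p" "?p!k = v"
    using inner_iff_nth[OF distinct_path[OF x]] v by blast
  note nbrs = inner_neighbours[OF distinct_path[OF x] k(1,2), unfolded k(3)]
  have sub: "{?p!(k-1), ?p!Suc k} \<subseteq> {w\<in>V. Adj v w}"
    using nbrs(1) consecutive_adj[OF x] adj_in_V by blast
  have "card {w\<in>V. Adj v w} = 2" using inner_degree_shared(1)[OF x v] unfolding degree_def .
  then have "{?p!(k-1), ?p!Suc k} = {w\<in>V. Adj v w}"
    using card_subset_eq[OF _ sub] nbrs(2) finite_V by simp
  then show ?thesis using nbrs(1) adj_in_V by blast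
qed

lemma adj_nth_inner_iff:
  assumes "x \<in> P" "0 < j" "Suc j < length (pth x)"
  shows "Adj (pth x!j) w \<longleftrightarrow> w = pth x!(j-1) \<or> w = pth x!Suc j"
  using adj_inner_iff_consecutive[OF assms(1)] consecutive_nth_iff[OF distinct_path[OF assms(1)]]
    inner_iff_nth[OF distinct_path[OF assms(1)]] assms by blast

lemma path_not_subset_inner:
  assumes "x \<in> P" "z \<in> P" "pth z \<noteq> []"
  shows "\<not> set (pth z) \<subseteq> inner (pth x)"
proof
  assume s: "set (pth z) \<subseteq> inner (pth x)"
  obtain v where "v \<in> set (pth z)" using assms(3) by (meson list.set_sel(1))
  then have "hd (pth x) \<in> set (pth z) \<or> last (pth x) \<in> set (pth z)"
    using inner_degree_shared(2)[OF assms(1) _ assms(2)] s by blast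
  then show False
    using s hd_not_inner last_not_inner distinct_path[OF assms(1)] by blast
qed

text \<open>Inner vertices of a path have no neighbours off that path, so another path can only
  leave a segment of it through the two edges at the ends of the segment.\<close>

lemma path_leaves_segment:
  assumes x: "x \<in> P" and z: "z \<in> P" and lr: "0 < l" "l \<le> r" "Suc r < length (pth x)"
    and v: "v \<in> set (pth z)" "v \<in> (\<lambda>i. pth x!i) ` {l..r}"
    and w: "w \<in> set (pth z)" "w \<notin> (\<lambda>i. pth x!i) ` {l..r}"
  shows "consecutive (pth z) (pth x!(l-1)) (pth x!l) \<or> consecutive (pth z) (pth x!r) (pth x!Suc r)"
proof -
  obtain s t where st: "consecutive (pth z) s t" "s \<in> (\<lambda>i. pth x!i) ` {l..r}"
      "t \<notin> (\<lambda>i. pth x!i) ` {l..r}"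
    using consecutive_crossing[OF v w] by blast
  obtain i where i: "l \<le> i" "i \<le> r" "s = pth x!i" using st(2) by auto
  have "t = pth x!(i-1) \<or> t = pth x!Suc i"
    using adj_nth_inner_iff[OF x, of i t] consecutive_adj[OF z st(1)] i lr by auto
  then have "(i = l \<and> t = pth x!(l-1)) \<or> (i = r \<and> t = pth x!Suc r)"
  proof
    assume t: "t = pth x!(i-1)"
    then have "i - 1 \<notin> {l..r}" using st(3) by blast
    then have "i = l" using i lr(1) by auto
    then show ?thesis using t by simp
  next
    assume t: "t = pth x!Suc i"
    then have "Suc i \<notin> {l..r}" using st(3) by blast
    then have "i = r" using i by auto
    then show ?thesis using t by simp
  qed
  then show ?thesis using st(1) i consecutive_sym by metis
qed

lemma prefix_or_suffix_in_path:
  assumes x: "x \<in> P" and z: "z \<in> P" and j: "0 < j" "Suc j < length (pth x)"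
    and xj: "pth x!j \<in> set (pth z)"
  shows "(\<forall>i\<le>j. pth x!i \<in> set (pth z)) \<or>
    (\<forall>i. j \<le> i \<and> i < length (pth x) \<longrightarrow> pth x!i \<in> set (pth z))"
proof (rule ccontr)
  let ?q = "pth x" and ?Z = "set (pth z)"
  assume "\<not> ?thesis"
  then obtain i0 i1 where i0: "i0 \<le> j" "?q!i0 \<notin> ?Z"
    and i1: "j \<le> i1" "i1 < length ?q" "?q!i1 \<notin> ?Z" by blast
  have lt: "i0 < j" "j < i1" using i0 i1 xj le_neq_implies_less by blast+
  have dq: "distinct ?q" using distinct_path[OF x] .
  obtain w where w: "w \<in> ?Z" "w = hd ?q \<or> w = last ?q"
    using inner_degree_shared(2)[OF x _ z] inner_iff_nth[OF dq] j xj by blast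
  have "w = ?q!0 \<or> w = ?q!(length ?q - 1)"
    using w(2) i1 by (metis hd_conv_nth last_conv_nth list.size(3) not_less_zero)
  moreover have "w \<notin> (\<lambda>i. ?q!i) ` {Suc i0..i1 - 1}"
  proof
    assume "w \<in> (\<lambda>i. ?q!i) ` {Suc i0..i1 - 1}"
    then obtain i where i: "Suc i0 \<le> i" "i \<le> i1 - 1" "w = ?q!i" by auto
    then have "0 < i" "i < length ?q - 1" "i < length ?q" "?q \<noteq> []" using lt i1 by auto
    then show False using calculation i(3) nth_eq_iff_index_eq[OF dq, of i 0]
        nth_eq_iff_index_eq[OF dq, of i "length ?q - 1"] by auto
  qed
  moreover have "?q!j \<in> (\<lambda>i. ?q!i) ` {Suc i0..i1 - 1}" using lt by auto
  ultimately have "consecutive (pth z) (?q!i0) (?q!Suc i0) \<or> consecutive (pth z) (?q!(i1 - 1)) (?q!i1)"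
    using path_leaves_segment[OF x z, of "Suc i0" "i1 - 1" "?q!j" w] xj w(1) lt i1 by auto
  then show False using consecutive_in_set i0(2) i1(3) by metis
qed

lemma adj_nth_indices:
  assumes x: "x \<in> P" and ij: "0 < i" "0 < j" "i < length (pth x)" "j < length (pth x)"
    and adj: "Adj (pth x!i) (pth x!j)"
  shows "i = Suc j \<or> j = Suc i"
proof -
  have dq: "distinct (pth x)" using distinct_path[OF x] .
  have "i \<noteq> j" using adj adj_in_V by auto
  have inner_case: "k = Suc l \<or> l = Suc k"
    if "0 < k" "Suc k < length (pth x)" "l < length (pth x)" "Adj (pth x!k) (pth x!l)" for k l
    using that adj_nth_inner_iff[OF x, of k "pth x!l"] nth_eq_iff_index_eq[OF dq] by auto
  show ?thesis
  proof (cases "Suc i < length (pth x)")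
    case True
    then show ?thesis using inner_case[of i j] ij adj by blast
  next
    case False
    then have "Suc j < length (pth x)" using ij \<open>i \<noteq> j\<close> by auto
    then show ?thesis using inner_case[of j i] ij adj adj_sym by blast
  qed
qed

end

section \<open>Contracting a path\<close>

text \<open>The vertex b is the predecessor of a on u; for a single-vertex path u it is the junk
  value u!0 = a, which is why Adj' only uses b when 2 \<le> n.\<close>

locale path_contraction = path_system V Adj P pth
  for V :: "'v set" and Adj and P :: "'i set" and pth +
  fixes eps :: 'i
  assumes eps_in_P: "eps \<in> P" and eps_nonempty: "pth eps \<noteq> []"
begin

abbreviation u :: "'v list" where "u \<equiv> pth eps"
abbreviation n :: nat where "n \<equiv> length u"

definition a :: 'v where "a = last u"
definition b :: 'v where "b = u!(n-2)"

lemma distinct_u: "distinct u"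
  using distinct_path[OF eps_in_P] .

lemma n_pos: "0 < n"
  using eps_nonempty by simp

lemma u_in_V: "i < n \<Longrightarrow> u!i \<in> V"
  using path_subset_V[OF eps_in_P] nth_mem by blast

lemma u_nth_eq_iff: "i < n \<Longrightarrow> j < n \<Longrightarrow> u!i = u!j \<longleftrightarrow> i = j"
  using distinct_u by (simp add: nth_eq_iff_index_eq)

lemma a_nth: "a = u!(n-1)"
  unfolding a_def using eps_nonempty by (simp add: last_conv_nth)

lemma nth_ne_a: "j < n - 1 \<Longrightarrow> u!j \<noteq> a"
  unfolding a_nth using u_nth_eq_iff[of j "n-1"] by auto

lemma adj_u_nth: "Suc j < n \<Longrightarrow> Adj (u!j) (u!Suc j)"
  using consecutive_adj[OF eps_in_P] unfolding consecutive_iff_nth by blast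

lemma adj_u_inner_iff: "0 < j \<Longrightarrow> Suc j < n \<Longrightarrow> Adj (u!j) w \<longleftrightarrow> w = u!(j-1) \<or> w = u!Suc j"
  using adj_nth_inner_iff[OF eps_in_P] .

lemma adj_b_a: "2 \<le> n \<Longrightarrow> Adj b a"
  unfolding a_nth b_def using adj_u_nth[of "n-2"] by (simp add: numeral_2_eq_2 Suc_diff_Suc)

lemma a_ne_b: "2 \<le> n \<Longrightarrow> a \<noteq> b"
  unfolding a_nth b_def using u_nth_eq_iff by auto

definition idx :: "'v \<Rightarrow> nat" where
  "idx v = (THE i. i < n \<and> u!i = v)"

lemma idx_nth: "i < n \<Longrightarrow> idx (u!i) = i"
  unfolding idx_def using u_nth_eq_iff by (metis (mono_tags, lifting) the_equality)

definition on_tail :: "nat \<Rightarrow> 'v \<Rightarrow> bool" where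
  "on_tail m v \<longleftrightarrow> (\<exists>i. m \<le> i \<and> i < n \<and> v = u!i)"

definition slide_down :: "nat \<Rightarrow> 'v \<Rightarrow> 'v" where
  "slide_down m v = (if on_tail m v then u!(idx v - 1) else v)"

definition slide_up :: "nat \<Rightarrow> 'v \<Rightarrow> 'v" where
  "slide_up m v = (if on_tail m v \<and> v \<noteq> a then u!Suc (idx v) else v)"

lemma on_tail_nth: "i < n \<Longrightarrow> on_tail m (u!i) \<longleftrightarrow> m \<le> i"
  unfolding on_tail_def using u_nth_eq_iff by auto

lemma slide_down_nth: "m \<le> i \<Longrightarrow> i < n \<Longrightarrow> slide_down m (u!i) = u!(i-1)"
  unfolding slide_down_def by (simp add: on_tail_nth idx_nth)

lemma slide_down_off: "\<not> on_tail m v \<Longrightarrow> slide_down m v = v"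
  unfolding slide_down_def by simp

lemma slide_up_nth: "m \<le> i \<Longrightarrow> Suc i < n \<Longrightarrow> slide_up m (u!i) = u!Suc i"
  unfolding slide_up_def using nth_ne_a[of i] by (simp add: on_tail_nth idx_nth)

lemma slide_up_off: "\<not> on_tail m v \<Longrightarrow> slide_up m v = v"
  unfolding slide_up_def by simp

lemma slide_down_in_V: "v \<in> V \<Longrightarrow> slide_down m v \<in> V"
  unfolding slide_down_def on_tail_def using u_in_V by (auto simp: idx_nth)

lemma on_tail_ne_a:
  assumes "on_tail m v" "v \<noteq> a"
  obtains i where "m \<le> i" "Suc i < n" "v = u!i"
proof -
  obtain i where i: "m \<le> i" "i < n" "v = u!i" using assms(1) unfolding on_tail_def by blast
  have "i \<noteq> n - 1" using i(3) assms(2) a_nth by auto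
  then show ?thesis using that i by simp
qed

lemma slide_up_in_V: "v \<in> V \<Longrightarrow> slide_up m v \<in> V"
proof (cases "on_tail m v \<and> v \<noteq> a")
  case True
  then obtain i where "m \<le> i" "Suc i < n" "v = u!i" using on_tail_ne_a by blast
  then show ?thesis using slide_up_nth u_in_V by simp
qed (auto simp: slide_up_def)

lemma inj_on_slide_down:
  assumes m: "0 < m"
  shows "inj_on (slide_down m) (- {u!(m-1)})"
proof (rule inj_onI)
  have one_side: False
    if v: "on_tail m v" and w: "\<not> on_tail m w" "w \<noteq> u!(m-1)"
      and eq: "slide_down m v = slide_down m w" for v w
  proof -
    obtain i where i: "m \<le> i" "i < n" "v = u!i" using v unfolding on_tail_def by blast
    then have wi: "w = u!(i-1)" using w eq by (simp add: slide_down_off slide_down_nth)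
    then have "\<not> m \<le> i - 1" using w(1) i on_tail_nth[of "i-1" m] by simp
    then have "i = m" using i m by linarith
    then show False using w(2) wi by simp
  qed
  fix v w assume v: "v \<in> - {u!(m-1)}" and w: "w \<in> - {u!(m-1)}"
    and eq: "slide_down m v = slide_down m w"
  show "v = w"
  proof (cases "on_tail m v")
    case True
    show ?thesis
    proof (cases "on_tail m w")
      case True
      obtain i j where ij: "m \<le> i" "i < n" "v = u!i" "m \<le> j" "j < n" "w = u!j"
        using \<open>on_tail m v\<close> True unfolding on_tail_def by blast
      then have "u!(i-1) = u!(j-1)" using eq by (simp add: slide_down_nth)
      then have "i - 1 = j - 1" using u_nth_eq_iff[of "i-1" "j-1"] ij by simp
      then have "i = j" using ij(1,4) m by linarith
      then show ?thesis using ij by simp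
    next
      case False
      then show ?thesis using one_side[OF \<open>on_tail m v\<close>] w eq by auto
    qed
  next
    case False
    show ?thesis
    proof (cases "on_tail m w")
      case True
      then show ?thesis using one_side[OF True False] v eq by auto
    next
      case False
      then show ?thesis using \<open>\<not> on_tail m v\<close> eq by (simp add: slide_down_off)
    qed
  qed
qed

lemma slide_down_ne_a:
  assumes m: "0 < m" "m \<le> n" and v: "v \<noteq> u!(m-1)"
  shows "slide_down m v \<noteq> a"
proof (cases "on_tail m v")
  case True
  then obtain i where "m \<le> i" "i < n" "v = u!i" unfolding on_tail_def by blast
  then show ?thesis using slide_down_nth nth_ne_a m(1) by simp
next
  case False
  have "v \<noteq> a"
  proof
    assume "v = a"
    then have "\<not> m \<le> n - 1" using False on_tail_nth[of "n-1" m] a_nth n_pos by simp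
    then have "m = n" using m by linarith
    then show False using v \<open>v = a\<close> a_nth by simp
  qed
  then show ?thesis using False by (simp add: slide_down_off)
qed

lemma inj_on_slide_up: "inj_on (slide_up m) (- {a})"
proof (rule inj_onI)
  have one_side: False
    if v: "on_tail m v" "v \<noteq> a" and w: "\<not> on_tail m w" "slide_up m v = slide_up m w" for v w
  proof -
    obtain i where i: "m \<le> i" "Suc i < n" "v = u!i" using on_tail_ne_a[OF v] .
    then have "w = u!Suc i" using w by (simp add: slide_up_off slide_up_nth)
    then show False using w(1) i on_tail_nth by simp
  qed
  fix v w assume v: "v \<in> - {a}" and w: "w \<in> - {a}" and eq: "slide_up m v = slide_up m w"
  show "v = w"
  proof (cases "on_tail m v")
    case True
    show ?thesis
    proof (cases "on_tail m w")
      case True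
      obtain i where "m \<le> i" "Suc i < n" "v = u!i" using on_tail_ne_a \<open>on_tail m v\<close> v by blast
      moreover obtain j where "m \<le> j" "Suc j < n" "w = u!j" using on_tail_ne_a True w by blast
      moreover have "u!Suc i = u!Suc j" using eq calculation by (simp add: slide_up_nth)
      ultimately show ?thesis using u_nth_eq_iff[of "Suc i" "Suc j"] by simp
    next
      case False
      then show ?thesis using one_side \<open>on_tail m v\<close> v eq by auto
    qed
  next
    case False
    show ?thesis
    proof (cases "on_tail m w")
      case True
      then show ?thesis using one_side[OF True _ False] w eq by auto
    next
      case False
      then show ?thesis using \<open>\<not> on_tail m v\<close> eq by (simp add: slide_up_off)
    qed
  qed
qed

lemma slide_up_ne_nth:
  assumes "m < n" "v \<noteq> a"
  shows "slide_up m v \<noteq> u!m"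
proof (cases "on_tail m v")
  case True
  then obtain i where "m \<le> i" "Suc i < n" "v = u!i" using on_tail_ne_a assms(2) by blast
  then show ?thesis using slide_up_nth u_nth_eq_iff[of "Suc i" m] assms(1) by simp
next
  case False
  then show ?thesis using assms on_tail_nth by (auto simp: slide_up_off)
qed

definition tail_start :: "'i \<Rightarrow> nat" where
  "tail_start z = (LEAST j. \<forall>i. j \<le> i \<and> i < n \<longrightarrow> u!i \<in> set (pth z))"

definition partial :: "'i \<Rightarrow> bool" where
  "partial z \<longleftrightarrow> a \<in> set (pth z) \<and> \<not> set u \<subseteq> set (pth z)"

lemma tail_start_in:
  assumes "tail_start z \<le> i" "i < n"
  shows "u!i \<in> set (pth z)"
proof -
  have "\<forall>i. tail_start z \<le> i \<and> i < n \<longrightarrow> u!i \<in> set (pth z)"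
    unfolding tail_start_def
    by (rule LeastI[of "\<lambda>j. \<forall>i. j \<le> i \<and> i < n \<longrightarrow> u!i \<in> set (pth z)" n]) auto
  then show ?thesis using assms by blast
qed

lemma tail_start_le: "(\<And>i. j \<le> i \<Longrightarrow> i < n \<Longrightarrow> u!i \<in> set (pth z)) \<Longrightarrow> tail_start z \<le> j"
  unfolding tail_start_def by (rule Least_le) blast

lemma partialD:
  assumes "partial z"
  shows "0 < tail_start z" "tail_start z < n" "u!(tail_start z - 1) \<notin> set (pth z)" "2 \<le> n"
proof -
  have "u!i \<in> set (pth z)" if "n - 1 \<le> i" "i < n" for i
  proof -
    have "i = n - 1" using that by linarith
    then show ?thesis using assms a_nth unfolding partial_def by simp
  qed
  then have "tail_start z \<le> n - 1" by (rule tail_start_le)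
  then show lt: "tail_start z < n" using n_pos by linarith
  show pos: "0 < tail_start z"
  proof (rule ccontr)
    assume "\<not> 0 < tail_start z"
    have "set u \<subseteq> set (pth z)"
    proof
      fix x assume "x \<in> set u"
      then obtain i where "i < n" "x = u!i" by (auto simp: in_set_conv_nth)
      then show "x \<in> set (pth z)" using tail_start_in[of z i] \<open>\<not> 0 < tail_start z\<close> by simp
    qed
    then show False using assms unfolding partial_def by blast
  qed
  show "u!(tail_start z - 1) \<notin> set (pth z)"
  proof
    assume pred: "u!(tail_start z - 1) \<in> set (pth z)"
    have "u!i \<in> set (pth z)" if "tail_start z - 1 \<le> i" "i < n" for i
    proof (cases "i = tail_start z - 1")
      case False
      then show ?thesis using tail_start_in that by simp
    qed (use pred in simp)
    then have "tail_start z \<le> tail_start z - 1" by (rule tail_start_le)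
    then show False using pos by linarith
  qed
  show "2 \<le> n" using pos lt by linarith
qed

definition pth' :: "'i \<Rightarrow> 'v list" where
  "pth' z = (if a \<notin> set (pth z) then pth z
     else if set u \<subseteq> set (pth z) then removeAll a (pth z)
     else map (slide_down (tail_start z)) (pth z))"

definition V' :: "'v set" where
  "V' = V - {a}"

definition Adj' :: "'v \<Rightarrow> 'v \<Rightarrow> bool" where
  "Adj' v w \<longleftrightarrow> v \<in> V' \<and> w \<in> V' \<and> v \<noteq> w \<and>
     (Adj v w \<or> (2 \<le> n \<and> ((v = b \<and> Adj a w) \<or> (w = b \<and> Adj a v))))"

lemma pth'_unchanged: "a \<notin> set (pth z) \<Longrightarrow> pth' z = pth z"
  unfolding pth'_def by simp

lemma pth'_full: "a \<in> set (pth z) \<Longrightarrow> set u \<subseteq> set (pth z) \<Longrightarrow> pth' z = removeAll a (pth z)"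
  unfolding pth'_def by simp

lemma pth'_partial: "partial z \<Longrightarrow> pth' z = map (slide_down (tail_start z)) (pth z)"
  unfolding pth'_def partial_def by simp

lemma set_pth'_partial:
  assumes z: "partial z"
  shows "set (pth' z) = insert (u!(tail_start z - 1)) (set (pth z) - {a})"
proof -
  let ?m = "tail_start z"
  note D = partialD[OF z]
  have "slide_down ?m ` set (pth z) = insert (u!(?m - 1)) (set (pth z) - {a})"
  proof (intro equalityI subsetI)
    fix x assume "x \<in> slide_down ?m ` set (pth z)"
    then obtain v where v: "v \<in> set (pth z)" "x = slide_down ?m v" by blast
    show "x \<in> insert (u!(?m - 1)) (set (pth z) - {a})"
    proof (cases "on_tail ?m v")
      case False
      then show ?thesis using v slide_down_off on_tail_nth[of "n-1"] a_nth D(2) by auto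
    next
      case True
      then obtain i where i: "?m \<le> i" "i < n" "v = u!i" unfolding on_tail_def by blast
      then have x: "x = u!(i-1)" using v slide_down_nth by simp
      show ?thesis
      proof (cases "i = ?m")
        case False
        then have "u!(i-1) \<in> set (pth z)" using tail_start_in[of z "i-1"] i by auto
        moreover have "u!(i-1) \<noteq> a" using nth_ne_a i D(1) by simp
        ultimately show ?thesis using x by simp
      qed (use x in simp)
    qed
  next
    fix x assume x: "x \<in> insert (u!(?m - 1)) (set (pth z) - {a})"
    show "x \<in> slide_down ?m ` set (pth z)"
    proof (cases "x = u!(?m - 1)")
      case True
      then have "x = slide_down ?m (u!?m)" using slide_down_nth D by simp
      then show ?thesis using tail_start_in D by blast
    next
      case False
      then have xz: "x \<in> set (pth z)" "x \<noteq> a" using x by auto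
      show ?thesis
      proof (cases "on_tail ?m x")
        case True
        then obtain i where i: "?m \<le> i" "Suc i < n" "x = u!i" using on_tail_ne_a xz(2) by blast
        then have "x = slide_down ?m (u!Suc i)" using slide_down_nth by simp
        then show ?thesis using tail_start_in i by (metis image_eqI le_SucI)
      qed (use xz slide_down_off in \<open>metis image_eqI\<close>)
    qed
  qed
  then show ?thesis using pth'_partial[OF z] by simp
qed

lemma set_pth_minus_a: "set (pth z) - {a} \<subseteq> set (pth' z)"
proof (cases "a \<in> set (pth z) \<and> \<not> set u \<subseteq> set (pth z)")
  case True
  then show ?thesis using set_pth'_partial unfolding partial_def by blast
next
  case False
  then show ?thesis using pth'_unchanged pth'_full by (cases "a \<in> set (pth z)") auto
qed

lemma b_in_pth':
  assumes a: "a \<in> set (pth z)" and n: "2 \<le> n"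
  shows "b \<in> set (pth' z)"
proof (cases "partial z \<and> tail_start z = n - 1")
  case True
  then have "tail_start z - 1 = n - 2" by linarith
  then have "b = u!(tail_start z - 1)" unfolding b_def by simp
  then show ?thesis unfolding set_pth'_partial[OF conjunct1[OF True]] by simp
next
  case False
  have "b \<in> set (pth z)"
  proof (cases "partial z")
    case True
    then have "tail_start z \<le> n - 2" using False partialD(2)[OF True] by linarith
    then show ?thesis using tail_start_in[of z "n-2"] n unfolding b_def by simp
  next
    case False
    then have "set u \<subseteq> set (pth z)" using a unfolding partial_def by blast
    moreover have "b \<in> set u" unfolding b_def using n by simp
    ultimately show ?thesis by blast
  qed
  then show ?thesis using set_pth_minus_a[of z] a_ne_b[OF n] by auto
qed

lemma new_vertex_in_pth':
  assumes "v \<in> set (pth' z)" "v \<notin> set (pth z)"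
  shows "partial z \<and> v = u!(tail_start z - 1)"
  using assms pth'_unchanged pth'_full set_pth'_partial unfolding partial_def
  by (cases "a \<in> set (pth z)"; cases "set u \<subseteq> set (pth z)") auto

lemma a_notin_pth': "a \<notin> set (pth' z)"
proof (cases "partial z")
  case True
  have "tail_start z - 1 < n - 1" using partialD(1,2)[OF True] by linarith
  then show ?thesis using set_pth'_partial[OF True] nth_ne_a by (metis DiffD2 insertE singletonI)
next
  case False
  then show ?thesis
    using pth'_unchanged pth'_full unfolding partial_def by (cases "a \<in> set (pth z)") auto
qed

lemma set_pth'_subset_V':
  assumes "z \<in> P"
  shows "set (pth' z) \<subseteq> V'"
proof
  fix v assume v: "v \<in> set (pth' z)"
  have "v \<in> V"
  proof (cases "v \<in> set (pth z)")
    case True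
    then show ?thesis using path_subset_V[OF assms] by blast
  next
    case False
    then have "partial z" "v = u!(tail_start z - 1)" using new_vertex_in_pth' v by auto
    then show ?thesis using partialD(2)[OF \<open>partial z\<close>] u_in_V[of "tail_start z - 1"] by simp
  qed
  then show "v \<in> V'" using a_notin_pth' v unfolding V'_def by auto
qed

lemma pred_in_pth':
  assumes z: "z \<in> P" and j: "0 < j" "j < n" and uj: "u!j \<in> set (pth z)"
  shows "u!(j-1) \<in> set (pth' z)"
proof (cases "u!(j-1) \<in> set (pth z)")
  case True
  moreover have "u!(j-1) \<noteq> a" using nth_ne_a[of "j-1"] j by simp
  ultimately show ?thesis using set_pth_minus_a[of z] by auto
next
  case False
  have tail: "u!i \<in> set (pth z)" if "j \<le> i" "i < n" for i
  proof (cases "Suc j < n")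
    case True
    have "\<not> (\<forall>i\<le>j. u!i \<in> set (pth z))" using False by (meson diff_le_self)
    then show ?thesis using prefix_or_suffix_in_path[OF eps_in_P z j(1) True uj] that by blast
  next
    case False
    then have "i = j" using that by linarith
    then show ?thesis using uj by simp
  qed
  have "a \<in> set (pth z)" using tail[of "n-1"] j a_nth by simp
  moreover have "u!(j-1) \<in> set u" using j by simp
  ultimately have "partial z" using False unfolding partial_def by blast
  moreover have "tail_start z = j"
  proof -
    have "tail_start z \<le> j" using tail by (rule tail_start_le)
    moreover have "\<not> tail_start z \<le> j - 1" using tail_start_in[of z "j-1"] False j(2) by linarith
    ultimately show ?thesis by linarith
  qed
  ultimately show ?thesis using set_pth'_partial by simp
qed

lemma simple_graph_contracted: "simple_graph V' Adj'"
  unfolding simple_graph_def Adj'_def V'_def using finite_V adj_sym by auto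

lemma adj'_sym: "Adj' v w \<Longrightarrow> Adj' w v"
  unfolding Adj'_def using adj_sym by blast

lemma adj'I: "v \<in> V \<Longrightarrow> w \<in> V \<Longrightarrow> v \<noteq> a \<Longrightarrow> w \<noteq> a \<Longrightarrow> Adj v w \<Longrightarrow> Adj' v w"
  unfolding Adj'_def V'_def using adj_in_V by blast

lemma inner_a_imp_long:
  assumes "y \<in> P" "a \<in> inner (pth y)"
  shows "2 \<le> n"
proof (rule ccontr)
  assume "\<not> 2 \<le> n"
  then have "n = 1" using n_pos by linarith
  then have "u = [a]" unfolding a_def by (cases u) auto
  then have "set u = {a}" by simp
  then have "a = hd (pth y) \<or> a = last (pth y)" using inner_degree_shared(2)[OF assms eps_in_P] by auto
  then show False using assms hd_not_inner last_not_inner distinct_path by metis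
qed

lemma slide_a: "partial z \<Longrightarrow> slide_down (tail_start z) a = b"
  using slide_down_nth[of "tail_start z" "n-1"] partialD[of z] unfolding a_nth b_def
  by (simp add: numeral_2_eq_2)

lemma partial_adj_off_tail:
  assumes z: "partial z" and i: "tail_start z \<le> i" "i < n"
    and w: "w \<in> set (pth z)" "\<not> on_tail (tail_start z) w" and adj: "Adj (u!i) w"
  shows "i = n - 1"
proof (rule ccontr)
  assume "i \<noteq> n - 1"
  then have i': "0 < i" "Suc i < n" using i partialD(1)[OF z] by auto
  then have "w = u!(i-1) \<or> w = u!Suc i" using adj_u_inner_iff adj by blast
  then show False
  proof
    assume wi: "w = u!(i-1)"
    then have "\<not> tail_start z \<le> i - 1" using w(2) i' on_tail_nth[of "i-1"] by auto
    then have "i = tail_start z" using i by linarith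
    then show False using w(1) wi partialD(3)[OF z] by simp
  next
    assume "w = u!Suc i"
    then show False using w(2) i i' on_tail_nth[of "Suc i"] by simp
  qed
qed

lemma partial_tail_consecutive:
  assumes z: "z \<in> P" "partial z" and i: "tail_start z \<le> i" "Suc i < n"
  shows "consecutive (pth z) (u!i) (u!Suc i)"
proof -
  note D = partialD[OF z(2)]
  have "a \<notin> (\<lambda>k. u!k) ` {tail_start z..i}"
  proof
    assume "a \<in> (\<lambda>k. u!k) ` {tail_start z..i}"
    then obtain k where k: "k \<le> i" "a = u!k" by auto
    then have "k < n - 1" using i by linarith
    then have "u!k \<noteq> a" by (rule nth_ne_a)
    then show False using k(2) by simp
  qed
  moreover have "u!tail_start z \<in> (\<lambda>k. u!k) ` {tail_start z..i}" using i by auto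
  moreover have "u!tail_start z \<in> set (pth z)" using tail_start_in D(2) by simp
  moreover have "a \<in> set (pth z)" using z(2) unfolding partial_def by blast
  ultimately have "consecutive (pth z) (u!(tail_start z - 1)) (u!tail_start z) \<or>
      consecutive (pth z) (u!i) (u!Suc i)"
    using path_leaves_segment[OF eps_in_P z(1) D(1) i] by blast
  moreover have "\<not> consecutive (pth z) (u!(tail_start z - 1)) (u!tail_start z)"
    using D(3) consecutive_in_set by metis
  ultimately show ?thesis by blast
qed

lemma partial_tail_inner:
  assumes z: "z \<in> P" "partial z" and i: "tail_start z < i" "Suc i < n"
  shows "u!i \<in> inner (pth z)"
proof -
  have "tail_start z \<le> i - 1" "Suc (i - 1) < n" using i by auto
  from partial_tail_consecutive[OF z this] have "consecutive (pth z) (u!(i-1)) (u!i)"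
    using i by simp
  then have "consecutive (pth z) (u!i) (u!(i-1))" by (rule consecutive_sym[THEN iffD1])
  moreover have "consecutive (pth z) (u!i) (u!Suc i)"
    using partial_tail_consecutive[OF z, of i] i by simp
  moreover have "u!(i-1) \<noteq> u!Suc i" using u_nth_eq_iff i by simp
  ultimately show ?thesis unfolding inner_def by blast
qed

lemma tail_start_not_inner:
  assumes z: "z \<in> P" "partial z"
  shows "u!tail_start z \<notin> inner (pth z)"
proof
  let ?m = "tail_start z"
  note D = partialD[OF z(2)]
  assume inner: "u!?m \<in> inner (pth z)"
  show False
  proof (cases "Suc ?m < n")
    case True
    have "x = u!Suc ?m" if "consecutive (pth z) (u!?m) x" for x
    proof -
      have "x = u!(?m - 1) \<or> x = u!Suc ?m"
        using consecutive_adj[OF z(1) that] adj_u_inner_iff True D(1) by blast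
      then show ?thesis using D(3) that consecutive_in_set by metis
    qed
    then show False using inner unfolding inner_def by blast
  next
    case False
    then have "?m = n - 1" using D by auto
    then have "a \<in> inner (pth z)" using inner a_nth by simp
    then have "consecutive (pth z) a b"
      using adj_inner_iff_consecutive[OF z(1)] adj_b_a[OF D(4)] adj_sym by blast
    moreover have "b = u!(?m - 1)" using \<open>?m = n - 1\<close> unfolding b_def by (simp add: numeral_2_eq_2)
    ultimately show False using D(3) consecutive_in_set by metis
  qed
qed

lemma slide_eq_b:
  assumes z: "partial z" and w: "w \<in> set (pth z)" "slide_down (tail_start z) w = b"
  shows "w = a"
proof (cases "on_tail (tail_start z) w")
  case True
  note D = partialD[OF z]
  obtain i where i: "tail_start z \<le> i" "i < n" "w = u!i" using True unfolding on_tail_def by blast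
  then have "u!(i-1) = u!(n-2)" using w(2) slide_down_nth unfolding b_def by simp
  moreover have "i - 1 < n" "n - 2 < n" using i by auto
  ultimately have "i - 1 = n - 2" using u_nth_eq_iff by blast
  then have "i = n - 1" using i(1) D(1,4) by linarith
  then show ?thesis using i(3) a_nth by simp
next
  case False
  note D = partialD[OF z]
  have wb: "w = b" using w(2) slide_down_off[OF False] by simp
  have "\<not> tail_start z \<le> n - 2"
    using False on_tail_nth[of "n-2" "tail_start z"] D(4) unfolding wb b_def by simp
  then have "tail_start z - 1 = n - 2" using D(2) by linarith
  then have "b = u!(tail_start z - 1)" unfolding b_def by simp
  then show ?thesis using w(1) wb D(3) by simp
qed

lemma b_on_tail:
  assumes z: "partial z" and b: "b \<in> set (pth z)"
  shows "tail_start z \<le> n - 2" "on_tail (tail_start z) b"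
proof -
  note D = partialD[OF z]
  show le: "tail_start z \<le> n - 2"
  proof (rule ccontr)
    assume "\<not> tail_start z \<le> n - 2"
    then have "tail_start z - 1 = n - 2" using D(2) by linarith
    then have "b = u!(tail_start z - 1)" unfolding b_def by simp
    then show False using b D(3) by simp
  qed
  then show "on_tail (tail_start z) b" unfolding b_def using D(4) on_tail_nth[of "n-2"] by simp
qed

lemma inj_on_slide_path:
  assumes "partial z"
  shows "inj_on (slide_down (tail_start z)) (set (pth z))"
proof -
  have "set (pth z) \<subseteq> - {u!(tail_start z - 1)}" using partialD(3)[OF assms] by blast
  with inj_on_slide_down[OF partialD(1)[OF assms]] show ?thesis by (rule inj_on_subset)
qed

lemma distinct_pth':
  assumes "z \<in> P"
  shows "distinct (pth' z)"
proof (cases "partial z")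
  case True
  then show ?thesis
    using pth'_partial[OF True] inj_on_slide_path[OF True] distinct_path[OF assms] by (simp add: distinct_map)
next
  case False
  then show ?thesis
    using pth'_unchanged pth'_full distinct_path[OF assms] unfolding partial_def
    by (cases "a \<in> set (pth z)") (auto simp: distinct_removeAll)
qed

subsection \<open>The contracted collection is path-circular\<close>

lemma consecutive_unchanged_adj':
  assumes z: "z \<in> P" "a \<notin> set (pth z)" and c: "consecutive (pth z) v w"
  shows "Adj' v w"
proof (rule adj'I)
  show "Adj v w" using consecutive_adj[OF z(1) c] .
  then show "v \<in> V" "w \<in> V" using adj_in_V by auto
  show "v \<noteq> a" "w \<noteq> a" using consecutive_in_set[OF c] z(2) by auto
qed

lemma consecutive_removeAll_adj':
  assumes z: "z \<in> P" "a \<in> set (pth z)" and c: "consecutive (removeAll a (pth z)) v w"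
  shows "Adj' v w"
proof -
  have dz: "distinct (pth z)" using distinct_path[OF z(1)] .
  consider "consecutive (pth z) v w" "v \<noteq> a" "w \<noteq> a"
    | "consecutive (pth z) v a" "consecutive (pth z) a w" "v \<noteq> w"
    using c consecutive_removeAll[OF dz z(2)] by blast
  then show ?thesis
  proof cases
    case 1
    have "Adj v w" using consecutive_adj[OF z(1) 1(1)] .
    then show ?thesis using adj'I adj_in_V 1(2,3) by blast
  next
    case 2
    have av: "consecutive (pth z) a v" using 2(1) consecutive_sym by metis
    have inner: "a \<in> inner (pth z)" unfolding inner_def using av 2(2,3) by blast
    have n: "2 \<le> n" using inner_a_imp_long[OF z(1) inner] .
    have "consecutive (pth z) a b"
      using adj_inner_iff_consecutive[OF z(1) inner] adj_b_a[OF n] adj_sym by blast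
    then have b: "b = v \<or> b = w" using consecutive_at_most_two[OF dz av 2(2)] 2(3) by blast
    have "v \<in> set (pth z)" "w \<in> set (pth z)"
      using consecutive_in_set[OF av] consecutive_in_set[OF 2(2)] by auto
    moreover have "v \<noteq> a" "w \<noteq> a" using consecutive_neq[OF dz av] consecutive_neq[OF dz 2(2)] by auto
    ultimately have V': "v \<in> V'" "w \<in> V'" using path_subset_V[OF z(1)] unfolding V'_def by auto
    have "Adj a v" "Adj a w" using consecutive_adj[OF z(1)] av 2(2) by auto
    with b show ?thesis unfolding Adj'_def using V' 2(3) n by auto
  qed
qed

lemma adj'_slide_across:
  assumes z: "partial z" and p: "on_tail (tail_start z) p"
    and q: "\<not> on_tail (tail_start z) q" "q \<in> set (pth z)" and adj: "Adj p q"
    and V': "slide_down (tail_start z) p \<in> V'" "slide_down (tail_start z) q \<in> V'"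
  shows "Adj' (slide_down (tail_start z) p) (slide_down (tail_start z) q)"
proof -
  obtain i where i: "tail_start z \<le> i" "i < n" "p = u!i" using p unfolding on_tail_def by blast
  have "i = n - 1" using partial_adj_off_tail[OF z i(1,2) q(2,1)] adj i(3) by simp
  then have pa: "p = a" using i a_nth by simp
  have sq: "slide_down (tail_start z) q = q" using slide_down_off q(1) by simp
  have "q \<noteq> b" using slide_eq_b[OF z q(2)] sq pa p q(1) by auto
  then show ?thesis unfolding Adj'_def using slide_a[OF z] sq adj V' pa partialD(4)[OF z] by auto
qed

lemma consecutive_slide_adj':
  assumes z: "z \<in> P" "partial z" and c: "consecutive (map (slide_down (tail_start z)) (pth z)) v w"
  shows "Adj' v w"
proof -
  let ?m = "tail_start z" and ?\<sigma> = "slide_down (tail_start z)"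
  note D = partialD[OF z(2)]
  obtain v0 w0 where vw: "consecutive (pth z) v0 w0" "?\<sigma> v0 = v" "?\<sigma> w0 = w"
    using c unfolding consecutive_map by blast
  have adj: "Adj v0 w0" using consecutive_adj[OF z(1) vw(1)] .
  have in_z: "v0 \<in> set (pth z)" "w0 \<in> set (pth z)" using consecutive_in_set vw(1) by metis+
  have "v \<in> set (pth' z)" "w \<in> set (pth' z)" using pth'_partial[OF z(2)] in_z vw(2,3) by auto
  then have in_V': "v \<in> V'" "w \<in> V'" using set_pth'_subset_V'[OF z(1)] by auto
  show ?thesis
  proof (cases "on_tail ?m v0"; cases "on_tail ?m w0")
    assume "on_tail ?m v0" "on_tail ?m w0"
    then obtain i j where i: "?m \<le> i" "i < n" "v0 = u!i" and j: "?m \<le> j" "j < n" "w0 = u!j"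
      unfolding on_tail_def by blast
    have pos: "0 < i" "0 < j" using i(1) j(1) D(1) by linarith+
    then have ij: "i = Suc j \<or> j = Suc i"
      using adj_nth_indices[OF eps_in_P _ _ i(2) j(2)] adj i(3) j(3) by blast
    have v: "v = u!(i-1)" and w: "w = u!(j-1)" using vw slide_down_nth i j by auto
    have "Adj v w"
    proof (cases "i = Suc j")
      case True
      have "Adj (u!(j-1)) (u!Suc (j-1))" using adj_u_nth[of "j-1"] pos(2) j(2) by simp
      then show ?thesis using True v w pos(2) adj_sym by simp
    next
      case False
      then have "j = Suc i" using ij by simp
      have "Adj (u!(i-1)) (u!Suc (i-1))" using adj_u_nth[of "i-1"] pos(1) i(2) by simp
      then show ?thesis using \<open>j = Suc i\<close> v w pos(1) by simp
    qed
    then show ?thesis unfolding Adj'_def using in_V' adj_in_V by blast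
  next
    assume "on_tail ?m v0" "\<not> on_tail ?m w0"
    then show ?thesis using adj'_slide_across[OF z(2) _ _ in_z(2) adj] vw in_V' by simp
  next
    assume "\<not> on_tail ?m v0" "on_tail ?m w0"
    then have "Adj' w v" using adj'_slide_across[OF z(2) _ _ in_z(1) adj_sym[OF adj]] vw in_V' by simp
    then show ?thesis by (rule adj'_sym)
  next
    assume "\<not> on_tail ?m v0" "\<not> on_tail ?m w0"
    then have "v = v0" "w = w0" using slide_down_off vw by auto
    then show ?thesis unfolding Adj'_def using in_V' adj adj_in_V by auto
  qed
qed

lemma consecutive_pth'_adj':
  assumes z: "z \<in> P" and c: "consecutive (pth' z) v w"
  shows "Adj' v w"
proof (cases "partial z")
  case True
  then show ?thesis using consecutive_slide_adj'[OF z True] c pth'_partial by simp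
next
  case False
  then show ?thesis
    using consecutive_unchanged_adj'[OF z] consecutive_removeAll_adj'[OF z] c pth'_unchanged pth'_full
    unfolding partial_def by (cases "a \<in> set (pth z)") auto
qed

lemma is_path_pth':
  assumes z: "z \<in> P"
  shows "is_path V' Adj' (pth' z)"
  unfolding is_path_def using distinct_pth'[OF z] set_pth'_subset_V'[OF z]
    chain_iff_consecutive[of Adj' "pth' z", OF adj'_sym] consecutive_pth'_adj'[OF z] by blast

lemma adj'_inner_unchanged:
  assumes z: "z \<in> P" "a \<notin> set (pth z)" and v: "v \<in> inner (pth z)" and adj: "Adj' v x"
  shows "consecutive (pth z) v x"
proof -
  have not_a: "\<not> Adj v a"
    using adj_inner_iff_consecutive[OF z(1) v] consecutive_in_set z(2) by metis
  then have "2 \<le> n \<Longrightarrow> v \<noteq> b" using adj_b_a by blast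
  then have "Adj v x" using adj not_a adj_sym unfolding Adj'_def by blast
  then show ?thesis using adj_inner_iff_consecutive[OF z(1) v] by blast
qed

lemma adj'_inner_removeAll:
  assumes z: "z \<in> P" "a \<in> set (pth z)" and v: "v \<in> inner (removeAll a (pth z))"
    and adj: "Adj' v x"
  shows "consecutive (removeAll a (pth z)) v x"
proof -
  have dz: "distinct (pth z)" using distinct_path[OF z(1)] .
  have v_inner: "v \<in> inner (pth z)" and a_inner: "consecutive (pth z) v a \<Longrightarrow> a \<in> inner (pth z)"
    using inner_removeAll[OF dz z(2) v] by auto
  have vx: "v \<noteq> x" and va: "v \<noteq> a" and xa: "x \<noteq> a" using adj unfolding Adj'_def V'_def by auto
  note nbr = adj_inner_iff_consecutive[OF z(1)]
  consider "Adj v x" | "2 \<le> n" "v = b" "Adj a x" | "2 \<le> n" "x = b" "Adj a v"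
    using adj unfolding Adj'_def by blast
  then show ?thesis
  proof cases
    case 1
    then have "consecutive (pth z) v x" using nbr[OF v_inner] by blast
    then show ?thesis using va xa by (simp add: consecutive_removeAll[OF dz z(2)])
  next
    case 2
    have v_a: "consecutive (pth z) v a" using nbr[OF v_inner] adj_b_a[OF 2(1)] 2(2) by blast
    moreover have "consecutive (pth z) a x" using nbr[OF a_inner[OF v_a]] 2(3) by blast
    ultimately show ?thesis using vx by (simp add: consecutive_removeAll[OF dz z(2)])
  next
    case 3
    have v_a: "consecutive (pth z) v a" using nbr[OF v_inner] adj_sym[OF 3(3)] by blast
    moreover have "consecutive (pth z) a x"
      using nbr[OF a_inner[OF v_a]] adj_sym[OF adj_b_a[OF 3(1)]] 3(2) by blast
    ultimately show ?thesis using vx by (simp add: consecutive_removeAll[OF dz z(2)])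
  qed
qed

lemma adj'_slide_off_tail:
  assumes z: "z \<in> P" "partial z" and w: "w \<in> inner (pth z)" "\<not> on_tail (tail_start z) w"
    and adj: "Adj' w x"
  shows "\<exists>x0. consecutive (pth z) w x0 \<and> slide_down (tail_start z) x0 = x"
proof -
  have wz: "w \<in> set (pth z)" using subsetD[OF inner_subset_set w(1)] .
  have "w \<noteq> b" using b_on_tail(2)[OF z(2)] wz w(2) by blast
  then consider "Adj w x" | "x = b" "Adj a w"
    using adj unfolding Adj'_def by blast
  then show ?thesis
  proof cases
    case 1
    then have wx: "consecutive (pth z) w x" using adj_inner_iff_consecutive[OF z(1) w(1)] by blast
    have "\<not> on_tail (tail_start z) x"
    proof
      assume "on_tail (tail_start z) x"
      then obtain i where i: "tail_start z \<le> i" "i < n" "x = u!i" unfolding on_tail_def by blast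
      have "i = n - 1" using partial_adj_off_tail[OF z(2) i(1,2) wz w(2)] adj_sym[OF 1] i(3) by blast
      then show False using adj i(3) a_nth unfolding Adj'_def V'_def by simp
    qed
    then show ?thesis using wx slide_down_off by blast
  next
    case 2
    then have "consecutive (pth z) w a"
      using adj_inner_iff_consecutive[OF z(1) w(1)] adj_sym by blast
    then show ?thesis using slide_a[OF z(2)] 2(1) by blast
  qed
qed

lemma adj'_slide_last:
  assumes z: "z \<in> P" "partial z" and a: "a \<in> inner (pth z)" and adj: "Adj' b x"
  shows "\<exists>x0. consecutive (pth z) a x0 \<and> slide_down (tail_start z) x0 = x"
proof -
  let ?m = "tail_start z"
  note D = partialD[OF z(2)]
  note nbr = adj_inner_iff_consecutive[OF z(1) a]
  have "?m \<noteq> n - 1" using tail_start_not_inner[OF z] a a_nth by auto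
  then have m: "?m \<le> n - 2" "3 \<le> n" using D(1,2) by linarith+
  have x: "x \<noteq> a" "x \<noteq> b" using adj unfolding Adj'_def V'_def by auto
  consider "Adj b x" | "Adj a x" using adj x(2) unfolding Adj'_def by blast
  then show ?thesis
  proof cases
    case 1
    have "x = u!(n-2-1) \<or> x = u!Suc (n-2)"
      using adj_u_inner_iff[of "n-2" x] 1 m(2) unfolding b_def by simp
    moreover have "u!Suc (n-2) = a" using m(2) a_nth by (simp add: Suc_diff_Suc numeral_2_eq_2)
    ultimately have "x = u!(n-2-1)" using x(1) by auto
    moreover have "consecutive (pth z) a b" using nbr adj_sym[OF adj_b_a[OF D(4)]] by blast
    moreover have "slide_down ?m b = u!(n-2-1)" using slide_down_nth[OF m(1)] m(2) unfolding b_def by simp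
    ultimately show ?thesis by metis
  next
    case 2
    have ax: "consecutive (pth z) a x" using nbr 2 by blast
    have "\<not> on_tail ?m x"
    proof
      assume "on_tail ?m x"
      then obtain k where k: "?m \<le> k" "k < n" "x = u!k" unfolding on_tail_def by blast
      have "n - 1 = Suc k \<or> k = Suc (n - 1)"
        using adj_nth_indices[OF eps_in_P _ _ _ k(2), of "n-1"] 2 k(1,3) D(1) m(2) a_nth by simp
      then have "k = n - 2" using k(2) by linarith
      then show False using x(2) k(3) unfolding b_def by simp
    qed
    then show ?thesis using ax slide_down_off by blast
  qed
qed

lemma adj'_slide_tail:
  assumes z: "z \<in> P" "partial z" and i: "tail_start z < i" "Suc i < n"
    and adj: "Adj' (u!(i-1)) x"
  shows "\<exists>x0. consecutive (pth z) (u!i) x0 \<and> slide_down (tail_start z) x0 = x"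
proof -
  let ?m = "tail_start z"
  note D = partialD[OF z(2)]
  have i1: "0 < i - 1" "Suc (i - 1) < n" "Suc (i - 1) = i" using i D(1) by linarith+
  have "u!(i-1) \<noteq> b" using u_nth_eq_iff[of "i-1" "n-2"] i unfolding b_def by auto
  moreover have "\<not> Adj a (u!(i-1))"
  proof
    assume "Adj a (u!(i-1))"
    then have "a = u!(i-1-1) \<or> a = u!i" using adj_u_inner_iff[OF i1(1,2)] adj_sym i1(3) by metis
    moreover have "i - 1 - 1 < n - 1" "i < n - 1" using i by linarith+
    ultimately show False using nth_ne_a by metis
  qed
  ultimately have "Adj (u!(i-1)) x" using adj unfolding Adj'_def by blast
  then have "x = u!(i-1-1) \<or> x = u!i" using adj_u_inner_iff[OF i1(1,2)] i1(3) by metis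
  moreover have "consecutive (pth z) (u!i) (u!(i-1))"
    using partial_tail_consecutive[OF z, of "i-1"] i1 i consecutive_sym by (metis less_Suc_eq_le)
  moreover have "slide_down ?m (u!(i-1)) = u!(i-1-1)" using slide_down_nth i by simp
  moreover have "consecutive (pth z) (u!i) (u!Suc i)" using partial_tail_consecutive[OF z, of i] i by simp
  moreover have "slide_down ?m (u!Suc i) = u!i" using slide_down_nth i by simp
  ultimately show ?thesis by metis
qed

lemma adj'_inner_slide:
  assumes z: "z \<in> P" "partial z" and v: "v \<in> inner (map (slide_down (tail_start z)) (pth z))"
    and adj: "Adj' v x"
  shows "consecutive (map (slide_down (tail_start z)) (pth z)) v x"
proof -
  let ?m = "tail_start z"
  obtain w where w: "w \<in> inner (pth z)" "v = slide_down ?m w"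
    using v inner_map[OF inj_on_slide_path[OF z(2)]] by auto
  have "\<exists>x0. consecutive (pth z) w x0 \<and> slide_down ?m x0 = x"
  proof (cases "on_tail ?m w")
    case True
    then obtain i where i: "?m \<le> i" "i < n" "w = u!i" unfolding on_tail_def by blast
    have "i \<noteq> ?m" using tail_start_not_inner[OF z] w(1) i(3) by auto
    show ?thesis
    proof (cases "i = n - 1")
      case True
      then have "w = a" "v = b" using i(3) a_nth w(2) slide_a[OF z(2)] by auto
      then show ?thesis using adj'_slide_last[OF z] w(1) adj by simp
    next
      case False
      then have "v = u!(i-1)" using w(2) i slide_down_nth by simp
      then show ?thesis using adj'_slide_tail[OF z, of i] i \<open>i \<noteq> ?m\<close> False adj by simp
    qed
  next
    case False
    then show ?thesis using adj'_slide_off_tail[OF z w(1) False] adj w(2) slide_down_off by simp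
  qed
  then show ?thesis unfolding consecutive_map using w(2) by blast
qed

lemma adj'_inner_pth':
  assumes z: "z \<in> P" and v: "v \<in> inner (pth' z)" and adj: "Adj' v x"
  shows "consecutive (pth' z) v x"
proof (cases "partial z")
  case True
  then show ?thesis using adj'_inner_slide[OF z True] v adj pth'_partial by simp
next
  case False
  then show ?thesis
    using adj'_inner_unchanged[OF z] adj'_inner_removeAll[OF z] v adj pth'_unchanged pth'_full
    unfolding partial_def by (cases "a \<in> set (pth z)") auto
qed

lemma pth'_neighbour_of_a:
  assumes z: "z \<in> P" "a \<in> set (pth z)" "pth' z \<noteq> []"
  obtains c where "c \<in> set (pth' z)" "Adj c a"
proof (cases "2 \<le> n")
  case True
  then show ?thesis using that b_in_pth'[OF z(2)] adj_b_a by blast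
next
  case False
  then have "n = 1" using n_pos by linarith
  then have "u = [a]" unfolding a_def by (cases u) auto
  then have set_z': "set (pth' z) = set (pth z) - {a}" using pth'_full[OF z(2)] z(2) by simp
  obtain c0 where "c0 \<in> set (pth' z)" using z(3) by (meson list.set_sel(1))
  then have "c0 \<in> set (pth z)" "c0 \<notin> {a}" using set_z' by auto
  then obtain s t where st: "consecutive (pth z) s t" "s \<in> {a}" "t \<notin> {a}"
    using consecutive_crossing[OF z(2)] by blast
  then have "t \<in> set (pth' z)" using set_z' consecutive_in_set by fastforce
  moreover have "Adj t a" using consecutive_adj[OF z(1) st(1)] adj_sym st(2) by blast
  ultimately show ?thesis using that by blast
qed

lemma subset_inner_unchanged:
  assumes y: "y \<in> P" "a \<notin> set (pth y)" and z: "z \<in> P" "pth' z \<noteq> []"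
    and sub: "set (pth' z) \<subseteq> inner (pth y)"
  shows "set (pth z) \<subseteq> inner (pth y)"
proof -
  have "a \<notin> set (pth z)"
  proof
    assume "a \<in> set (pth z)"
    then obtain c where c: "c \<in> set (pth' z)" "Adj c a" using pth'_neighbour_of_a z by blast
    then have "consecutive (pth y) c a" using adj_inner_iff_consecutive[OF y(1)] sub by blast
    then show False using y(2) consecutive_in_set by metis
  qed
  then show ?thesis using sub set_pth_minus_a[of z] by auto
qed

lemma subset_inner_removeAll:
  assumes y: "y \<in> P" "a \<in> set (pth y)" and z: "z \<in> P" "pth' z \<noteq> []"
    and sub: "set (pth' z) \<subseteq> inner (removeAll a (pth y))"
  shows "set (pth z) \<subseteq> inner (pth y)"
proof -
  note inner_y = inner_removeAll[OF distinct_path[OF y(1)] y(2)]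
  have "a \<in> inner (pth y)" if "a \<in> set (pth z)"
  proof -
    obtain c where c: "c \<in> set (pth' z)" "Adj c a" using pth'_neighbour_of_a z \<open>a \<in> set (pth z)\<close> by blast
    then have "c \<in> inner (pth y)" using inner_y sub by blast
    then have "consecutive (pth y) c a" using adj_inner_iff_consecutive[OF y(1)] c(2) by blast
    then show ?thesis using inner_y(2) sub c(1) by blast
  qed
  moreover have "set (pth z) - {a} \<subseteq> inner (pth y)" using set_pth_minus_a[of z] sub inner_y(1) by auto
  ultimately show ?thesis by blast
qed

lemma slide_inner:
  assumes y: "y \<in> P" "partial y" and w: "w \<in> inner (pth y)"
  shows "slide_down (tail_start y) w \<in> inner (pth y) \<or> slide_down (tail_start y) w = u!tail_start y"
proof (cases "on_tail (tail_start y) w")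
  case True
  then obtain i where i: "tail_start y \<le> i" "i < n" "w = u!i" unfolding on_tail_def by blast
  have "i \<noteq> tail_start y" using tail_start_not_inner[OF y] w i(3) by auto
  have slide: "slide_down (tail_start y) w = u!(i-1)" using slide_down_nth[OF i(1,2)] i(3) by simp
  consider "i - 1 = tail_start y" | "tail_start y < i - 1" "Suc (i - 1) < n"
    using i \<open>i \<noteq> tail_start y\<close> by linarith
  then show ?thesis
  proof cases
    case 1
    then show ?thesis using slide by simp
  next
    case 2
    then show ?thesis using partial_tail_inner[OF y 2] slide by simp
  qed
qed (use w in \<open>simp add: slide_down_off\<close>)

lemma pred_tail_start_notin_slide_inner:
  assumes y: "y \<in> P" "partial y"
  shows "u!(tail_start y - 1) \<notin> slide_down (tail_start y) ` inner (pth y)"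
proof
  let ?m = "tail_start y" and ?\<sigma> = "slide_down (tail_start y)"
  note D = partialD[OF y(2)]
  assume "u!(?m - 1) \<in> ?\<sigma> ` inner (pth y)"
  then obtain w where w: "w \<in> inner (pth y)" "?\<sigma> w = u!(?m - 1)" by (metis imageE)
  have wy: "w \<in> set (pth y)" using subsetD[OF inner_subset_set w(1)] .
  have "?\<sigma> (u!?m) = u!(?m - 1)" using slide_down_nth D(2) by simp
  then have "w = u!?m"
    using inj_onD[OF inj_on_slide_path[OF y(2)]] w(2) wy tail_start_in[of y ?m] D(2) by auto
  then show False using tail_start_not_inner[OF y] w(1) by simp
qed

lemma subset_inner_slide:
  assumes y: "y \<in> P" "partial y" and z: "z \<in> P"
    and sub: "set (pth' z) \<subseteq> inner (map (slide_down (tail_start y)) (pth y))"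
  shows "set (pth z) \<subseteq> inner (pth y)"
proof -
  let ?m = "tail_start y" and ?\<sigma> = "slide_down (tail_start y)"
  note D = partialD[OF y(2)]
  have sub': "set (pth' z) \<subseteq> ?\<sigma> ` inner (pth y)"
    using sub inner_map[OF inj_on_slide_path[OF y(2)]] by simp
  have m_not_z: "u!?m \<notin> set (pth z)"
  proof
    assume "u!?m \<in> set (pth z)"
    then have "u!(?m - 1) \<in> set (pth' z)" using pred_in_pth'[OF z D(1,2)] by blast
    then show False using pred_tail_start_notin_slide_inner[OF y] sub' by auto
  qed
  have "a \<in> inner (pth y)" if "a \<in> set (pth z)"
  proof -
    have "b \<in> ?\<sigma> ` inner (pth y)" using b_in_pth'[OF that D(4)] sub' by blast
    then obtain w where w: "w \<in> inner (pth y)" "?\<sigma> w = b" by (metis imageE)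
    then have "w = a" using slide_eq_b[OF y(2)] subsetD[OF inner_subset_set w(1)] by blast
    then show ?thesis using w(1) by simp
  qed
  moreover have "x \<in> inner (pth y)" if "x \<in> set (pth z)" "x \<noteq> a" for x
  proof -
    have "x \<in> set (pth' z)" using set_pth_minus_a[of z] that by auto
    then obtain w where w: "w \<in> inner (pth y)" "x = ?\<sigma> w" using sub' by auto
    then show ?thesis using slide_inner[OF y w(1)] m_not_z that(1) by metis
  qed
  ultimately show ?thesis by blast
qed

lemma pth'_not_subset_inner:
  assumes y: "y \<in> P" and z: "z \<in> P" "pth' z \<noteq> []"
  shows "\<not> set (pth' z) \<subseteq> inner (pth' y)"
proof
  assume sub: "set (pth' z) \<subseteq> inner (pth' y)"
  have "pth z \<noteq> []" using z(2) unfolding pth'_def by auto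
  moreover have "set (pth z) \<subseteq> inner (pth y)"
  proof (cases "partial y")
    case True
    then show ?thesis using subset_inner_slide[OF y True z(1)] sub pth'_partial by simp
  next
    case False
    then show ?thesis
      using subset_inner_unchanged[OF y _ z] subset_inner_removeAll[OF y _ z] sub
        pth'_unchanged pth'_full unfolding partial_def by (cases "a \<in> set (pth y)") auto
  qed
  ultimately show False using path_not_subset_inner[OF y z(1)] by blast
qed

lemma path_circular_collection_contracted: "path_circular_collection V' Adj' P pth'"
  unfolding path_circular_collection_def
proof (intro conjI ballI allI impI)
  show "finite P" using finite_P .
next
  fix x assume "x \<in> P"
  then show "is_path V' Adj' (pth' x)" by (rule is_path_pth')
next
  fix x i assume x: "x \<in> P" and i: "0 < i \<and> Suc i < length (pth' x)"
  let ?p = "pth' x"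
  have dp: "distinct ?p" using distinct_pth'[OF x] .
  have "?p!i \<in> inner ?p" using inner_iff_nth[OF dp] i by blast
  then have "{w \<in> V'. Adj' (?p!i) w} = {w. consecutive ?p (?p!i) w}"
    using adj'_inner_pth'[OF x] consecutive_pth'_adj'[OF x] unfolding Adj'_def by blast
  also have "\<dots> = {?p!(i-1), ?p!Suc i}" using inner_neighbours(1)[OF dp] i by blast
  finally show "degree V' Adj' (?p!i) = 2" unfolding degree_def using inner_neighbours(2)[OF dp] i by simp
next
  fix x i y assume x: "x \<in> P" and i: "0 < i \<and> Suc i < length (pth' x)" and y: "y \<in> P"
    and xy: "pth' x ! i \<in> set (pth' y)"
  let ?p = "pth' x"
  have dp: "distinct ?p" using distinct_pth'[OF x] .
  have inner: "?p!i \<in> inner ?p" using inner_iff_nth[OF dp] i by blast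
  have "pth' y \<noteq> []" using xy by auto
  then obtain w where "w \<in> set (pth' y)" "w \<notin> inner ?p"
    using pth'_not_subset_inner[OF x y] by auto
  then obtain s t where st: "consecutive (pth' y) s t" "s \<in> inner ?p" "t \<notin> inner ?p"
    using consecutive_crossing[OF xy inner] by blast
  then have "consecutive ?p s t" using adj'_inner_pth'[OF x] consecutive_pth'_adj'[OF y] by blast
  then have "t = hd ?p \<or> t = last ?p" using not_inner_imp_end[OF dp _ st(3)] consecutive_in_set by metis
  then show "hd ?p \<in> set (pth' y) \<or> last ?p \<in> set (pth' y)" using st(1) consecutive_in_set by metis
qed

subsection \<open>Its transversal matroid is the contraction\<close>

lemma sdr_contracted:
  assumes S: "S \<subseteq> P - {eps}" and sdr: "is_sdr V pth (insert eps S) \<phi>"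
  shows "\<exists>\<psi>. is_sdr V' pth' S \<psi>"
proof -
  have inj: "inj_on \<phi> (insert eps S)" and rep: "\<And>x. x \<in> insert eps S \<Longrightarrow> \<phi> x \<in> V \<and> \<phi> x \<in> set (pth x)"
    using sdr unfolding is_sdr_def by auto
  obtain f where f: "f < n" "\<phi> eps = u!f" using rep[of eps] by (metis insertI1 in_set_conv_nth)
  let ?\<psi> = "slide_down (Suc f) \<circ> \<phi>"
  have ne: "\<phi> x \<noteq> u!f" if "x \<in> S" for x
    using inj_onD[OF inj, of x eps] f(2) that S by auto
  have "inj_on ?\<psi> S"
  proof (rule comp_inj_on)
    show "inj_on \<phi> S" using inj by (rule inj_on_subset) auto
    have "\<phi> ` S \<subseteq> - {u!f}"
    proof (rule image_subsetI)
      show "\<phi> x \<in> - {u!f}" if "x \<in> S" for x using ne[OF that] by simp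
    qed
    then show "inj_on (slide_down (Suc f)) (\<phi> ` S)"
      using inj_on_subset[OF inj_on_slide_down[of "Suc f"]] by simp
  qed
  moreover have "?\<psi> x \<in> V' \<and> ?\<psi> x \<in> set (pth' x)" if x: "x \<in> S" for x
  proof -
    have xP: "x \<in> P" using x S by auto
    have ne_a: "?\<psi> x \<noteq> a" using slide_down_ne_a[of "Suc f" "\<phi> x"] f(1) ne[OF x] by simp
    moreover have "?\<psi> x \<in> V" using slide_down_in_V rep x by auto
    moreover have "?\<psi> x \<in> set (pth' x)"
    proof (cases "on_tail (Suc f) (\<phi> x)")
      case True
      then obtain i where i: "Suc f \<le> i" "i < n" "\<phi> x = u!i" unfolding on_tail_def by blast
      then have "?\<psi> x = u!(i-1)" using slide_down_nth by simp
      moreover have "u!i \<in> set (pth x)" using rep[of x] x i(3) by auto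
      ultimately show ?thesis using pred_in_pth'[OF xP _ i(2)] i(1) by simp
    next
      case False
      then have "?\<psi> x = \<phi> x" using slide_down_off by simp
      then show ?thesis using set_pth_minus_a[of x] rep x ne_a by auto
    qed
    ultimately show ?thesis unfolding V'_def by simp
  qed
  ultimately show ?thesis unfolding is_sdr_def by blast
qed

definition new_reps :: "'i set \<Rightarrow> ('i \<Rightarrow> 'v) \<Rightarrow> 'i set" where
  "new_reps S \<psi> = {x \<in> S. \<psi> x \<notin> set (pth x)}"

lemma new_rep_on_u:
  assumes "is_sdr V' pth' S \<psi>" "x \<in> new_reps S \<psi>"
  shows "partial x" "\<psi> x = u!(tail_start x - 1)"
  using new_vertex_in_pth' assms unfolding is_sdr_def new_reps_def by blast+

lemma exchange_new_rep:
  assumes S: "S \<subseteq> P - {eps}" and sdr: "is_sdr V' pth' S \<psi>"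
    and min: "\<And>\<psi>'. is_sdr V' pth' S \<psi>' \<Longrightarrow> card (new_reps S \<psi>) \<le> card (new_reps S \<psi>')"
    and x: "x \<in> S" "x \<notin> new_reps S \<psi>" "\<psi> x = u!j" "j < n"
    and z: "z \<in> new_reps S \<psi>" "\<psi> z = u!i" "i < j"
  shows "u!Suc j \<in> set (pth x)"
proof (rule ccontr)
  assume not_next: "u!Suc j \<notin> set (pth x)"
  have inj: "inj_on \<psi> S" and rep: "\<And>y. y \<in> S \<Longrightarrow> \<psi> y \<in> V' \<and> \<psi> y \<in> set (pth' y)"
    using sdr unfolding is_sdr_def by auto
  have xP: "x \<in> P" and zS: "z \<in> S" and xz: "x \<noteq> z"
    using x z(1) S unfolding new_reps_def by auto
  have jx: "u!j \<in> set (pth x)" using x unfolding new_reps_def by auto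
  have "u!j \<noteq> a" using rep[OF x(1)] x(3) unfolding V'_def by auto
  then have Suc_j: "Suc j < n" using x(4) a_nth by (metis Suc_lessI diff_Suc_1)
  note z_part = new_rep_on_u[OF sdr z(1)]
  have "tail_start z - 1 < n" "i < n" using partialD(2)[OF z_part(1)] z(3) x(4) by linarith+
  then have "i = tail_start z - 1" using u_nth_eq_iff z(2) z_part(2) by metis
  then have "tail_start z \<le> j" using partialD(1)[OF z_part(1)] z(3) by linarith
  then have jz: "u!j \<in> set (pth z)" using tail_start_in x(4) by blast
  have "\<not> (\<forall>k. j \<le> k \<and> k < n \<longrightarrow> u!k \<in> set (pth x))"
    using not_next Suc_j le_SucI by blast
  then have ix: "u!i \<in> set (pth x)"
    using prefix_or_suffix_in_path[OF eps_in_P xP _ Suc_j jx] z(3) by auto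
  define \<tau> where "\<tau> y = (if y = x then z else if y = z then x else y)" for y
  have "inj_on (\<psi> \<circ> \<tau>) S"
  proof (rule comp_inj_on)
    show "inj_on \<tau> S" unfolding \<tau>_def by (rule inj_onI) (auto split: if_splits)
    show "inj_on \<psi> (\<tau> ` S)" using inj by (rule inj_on_subset) (auto simp: \<tau>_def x(1) zS)
  qed
  moreover have "(\<psi> \<circ> \<tau>) y \<in> V' \<and> (\<psi> \<circ> \<tau>) y \<in> set (pth' y)" if "y \<in> S" for y
  proof -
    have "u!i \<noteq> a" "u!j \<noteq> a" using nth_ne_a z(3) Suc_j by auto
    moreover have "u!i \<in> V" "u!j \<in> V" using u_in_V z(3) x(4) by auto
    ultimately show ?thesis
      using set_pth_minus_a[of x] set_pth_minus_a[of z] ix jz rep[OF that] x(3) z(2)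
      unfolding \<tau>_def V'_def by auto
  qed
  ultimately have sdr': "is_sdr V' pth' S (\<psi> \<circ> \<tau>)" unfolding is_sdr_def by blast
  have "new_reps S (\<psi> \<circ> \<tau>) = new_reps S \<psi> - {z}"
    using ix jz x z xz unfolding new_reps_def \<tau>_def by auto
  moreover have "finite (new_reps S \<psi>)"
  proof (rule finite_subset[OF _ finite_P])
    show "new_reps S \<psi> \<subseteq> P" using S unfolding new_reps_def by auto
  qed
  ultimately have "card (new_reps S (\<psi> \<circ> \<tau>)) < card (new_reps S \<psi>)"
    using card_Diff1_less z(1) by metis
  then show False using min[OF sdr'] by simp
qed

lemma sdr_slide_up:
  assumes S: "S \<subseteq> P - {eps}" and sdr: "is_sdr V' pth' S \<psi>" and f_lt: "f < n"
    and new_ge: "\<And>x j. x \<in> new_reps S \<psi> \<Longrightarrow> \<psi> x = u!j \<Longrightarrow> j < n \<Longrightarrow> f \<le> j"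
    and next_in: "\<And>x j. x \<in> S \<Longrightarrow> \<psi> x = u!j \<Longrightarrow> j < n \<Longrightarrow> f \<le> j \<Longrightarrow> u!Suc j \<in> set (pth x)"
  shows "is_sdr V pth (insert eps S) (\<lambda>x. if x = eps then u!f else slide_up f (\<psi> x))"
proof -
  have inj: "inj_on \<psi> S" and rep: "\<And>x. x \<in> S \<Longrightarrow> \<psi> x \<in> V' \<and> \<psi> x \<in> set (pth' x)"
    using sdr unfolding is_sdr_def by auto
  have ne_a: "\<psi> x \<noteq> a" if "x \<in> S" for x using rep[OF that] unfolding V'_def by auto
  define \<phi> where "\<phi> = (\<lambda>x. if x = eps then u!f else slide_up f (\<psi> x))"
  have "inj_on (slide_up f \<circ> \<psi>) S"
  proof (rule comp_inj_on[OF inj])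
    have "\<psi> ` S \<subseteq> - {a}"
    proof (rule image_subsetI)
      show "\<psi> x \<in> - {a}" if "x \<in> S" for x using ne_a[OF that] by simp
    qed
    then show "inj_on (slide_up f) (\<psi> ` S)" using inj_on_subset[OF inj_on_slide_up] by blast
  qed
  then have "inj_on \<phi> S" unfolding \<phi>_def using S by (auto simp: inj_on_def)
  moreover have "\<phi> eps \<notin> \<phi> ` S"
  proof (rule notI, elim imageE)
    fix x assume "\<phi> eps = \<phi> x" "x \<in> S"
    moreover have "x \<noteq> eps" using S \<open>x \<in> S\<close> by auto
    ultimately have "slide_up f (\<psi> x) = u!f" unfolding \<phi>_def by simp
    then show False using slide_up_ne_nth[OF f_lt ne_a[OF \<open>x \<in> S\<close>]] by simp
  qed
  moreover have "S - {eps} = S" using S by auto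
  ultimately have "inj_on \<phi> (insert eps S)" by (simp add: inj_on_insert)
  moreover have "\<phi> x \<in> V \<and> \<phi> x \<in> set (pth x)" if x: "x \<in> S" for x
  proof -
    have phi: "\<phi> x = slide_up f (\<psi> x)" using x S unfolding \<phi>_def by auto
    have "\<psi> x \<in> V" using rep[OF x] unfolding V'_def by simp
    then have "\<phi> x \<in> V" using phi slide_up_in_V by simp
    moreover have "\<phi> x \<in> set (pth x)"
    proof (cases "on_tail f (\<psi> x)")
      case True
      then obtain j where j: "f \<le> j" "Suc j < n" "\<psi> x = u!j" using on_tail_ne_a ne_a[OF x] by blast
      then show ?thesis using phi slide_up_nth next_in[OF x j(3)] by simp
    next
      case False
      have "x \<notin> new_reps S \<psi>"
      proof
        assume new: "x \<in> new_reps S \<psi>"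
        note x_part = new_rep_on_u[OF sdr new]
        have "tail_start x - 1 < n" using partialD(2)[OF x_part(1)] by linarith
        then have "f \<le> tail_start x - 1" using new_ge[OF new x_part(2)] by blast
        then show False using False x_part(2) on_tail_nth \<open>tail_start x - 1 < n\<close> by simp
      qed
      then show ?thesis using phi slide_up_off[OF False] x unfolding new_reps_def by simp
    qed
    ultimately show ?thesis by blast
  qed
  moreover have "\<phi> eps \<in> V \<and> \<phi> eps \<in> set (pth eps)" using u_in_V f_lt unfolding \<phi>_def by simp
  ultimately show ?thesis unfolding is_sdr_def \<phi>_def[symmetric] by blast
qed

lemma sdr_insert_eps:
  assumes S: "S \<subseteq> P - {eps}" and sdr0: "is_sdr V' pth' S \<psi>0"
  shows "\<exists>\<phi>. is_sdr V pth (insert eps S) \<phi>"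
proof -
  obtain \<psi> where sdr: "is_sdr V' pth' S \<psi>"
    and min: "\<And>\<psi>'. is_sdr V' pth' S \<psi>' \<Longrightarrow> card (new_reps S \<psi>) \<le> card (new_reps S \<psi>')"
    using ex_has_least_nat[of "is_sdr V' pth' S" \<psi>0 "\<lambda>\<psi>. card (new_reps S \<psi>)"] sdr0 by blast
  have inj: "inj_on \<psi> S" and rep: "\<And>x. x \<in> S \<Longrightarrow> \<psi> x \<in> V' \<and> \<psi> x \<in> set (pth' x)"
    using sdr unfolding is_sdr_def by auto
  have ne_a: "\<psi> x \<noteq> a" if "x \<in> S" for x using rep[OF that] unfolding V'_def by auto
  define T where "T = {j. j < n \<and> u!j \<in> \<psi> ` new_reps S \<psi>}"
  define f where "f = (if T = {} then n - 1 else Min T)"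
  have fin_T: "finite T" unfolding T_def by simp
  have f_lt: "f < n" using Min_in[OF fin_T] n_pos unfolding f_def T_def by auto
  have new_ge: "f \<le> j" if "x \<in> new_reps S \<psi>" "\<psi> x = u!j" "j < n" for x j
  proof -
    have "u!j \<in> \<psi> ` new_reps S \<psi>" using that(1,2) by (metis image_eqI)
    then have "j \<in> T" unfolding T_def using that(3) by simp
    then show ?thesis unfolding f_def using Min_le[OF fin_T] by auto
  qed
  have next_in: "u!Suc j \<in> set (pth x)" if x: "x \<in> S" "\<psi> x = u!j" "j < n" "f \<le> j" for x j
  proof (cases "x \<in> new_reps S \<psi>")
    case True
    note x_part = new_rep_on_u[OF sdr True]
    have "tail_start x - 1 < n" using partialD(2)[OF x_part(1)] by linarith
    then have "j = tail_start x - 1" using u_nth_eq_iff x(2,3) x_part(2) by metis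
    then have "Suc j = tail_start x" using partialD(1)[OF x_part(1)] by linarith
    then show ?thesis using tail_start_in partialD(2)[OF x_part(1)] by simp
  next
    case False
    have "T \<noteq> {}"
    proof
      assume "T = {}"
      then have "j = n - 1" using x(3,4) unfolding f_def by simp
      then show False using ne_a[OF x(1)] x(2) a_nth by simp
    qed
    then have "f \<in> T" unfolding f_def using Min_in[OF fin_T] by simp
    then obtain z where z: "z \<in> new_reps S \<psi>" "\<psi> z = u!f" unfolding T_def by auto
    have "z \<in> S" using z(1) unfolding new_reps_def by simp
    then have "f \<noteq> j" using inj_onD[OF inj, of z x] x(1,2) z False by auto
    then show ?thesis using exchange_new_rep[OF S sdr min x(1) False x(2,3) z] x(4) by simp
  qed
  have "is_sdr V pth (insert eps S) (\<lambda>x. if x = eps then u!f else slide_up f (\<psi> x))"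
    by (rule sdr_slide_up[OF S sdr f_lt]) (fact new_ge, fact next_in)
  then show ?thesis by blast
qed

lemma mcontract_path_transversal:
  "mcontract (path_transversal V P pth) eps = path_transversal V' (P - {eps}) pth'"
proof -
  let ?N = "path_transversal V P pth"
  have "is_sdr V pth {eps} (\<lambda>_. hd u)" using u_in_V[of 0] n_pos eps_nonempty
    unfolding is_sdr_def by (simp add: hd_conv_nth)
  then have loopless: "indep ?N {eps}" using eps_in_P indep_path_transversal by blast
  show ?thesis
  proof (rule matroid_eqI)
    show "ground (mcontract ?N eps) = ground (path_transversal V' (P - {eps}) pth')"
      by (simp add: ground_mcontract ground_path_transversal)
  next
    fix X
    show "indep (mcontract ?N eps) X \<longleftrightarrow> indep (path_transversal V' (P - {eps}) pth') X"
    proof (cases "X \<subseteq> P - {eps}")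
      case True
      then have "insert eps X \<subseteq> P" using eps_in_P by auto
      then have "indep (mcontract ?N eps) X \<longleftrightarrow> (\<exists>\<phi>. is_sdr V pth (insert eps X) \<phi>)"
        using loopless True by (simp add: indep_mcontract indep_path_transversal ground_path_transversal)
      also have "\<dots> \<longleftrightarrow> (\<exists>\<psi>. is_sdr V' pth' X \<psi>)"
        using sdr_contracted[OF True] sdr_insert_eps[OF True] by blast
      also have "\<dots> \<longleftrightarrow> indep (path_transversal V' (P - {eps}) pth') X"
        using True by (simp add: indep_path_transversal)
      finally show ?thesis .
    next
      case False
      then show ?thesis by (simp add: indep_mcontract indep_path_transversal ground_path_transversal)
    qed
  qed
qed

end

section \<open>Minors of path-circular matroids\<close>

lemma path_circular_path_transversal:
  fixes V P :: "nat set"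
  assumes "simple_graph V Adj" "path_circular_collection V Adj P pth"
  shows "path_circular (path_transversal V P pth)"
  unfolding path_circular_def matroid_iso_def
  using assms by (intro exI[of _ V] exI[of _ Adj] exI[of _ P] exI[of _ pth] exI[of _ id] conjI)
    (auto simp: ground_path_transversal indep_path_transversal)

lemma path_circular_mdelete_transversal:
  fixes V P :: "nat set"
  assumes "simple_graph V Adj" "path_circular_collection V Adj P pth"
  shows "path_circular (mdelete (path_transversal V P pth) e)"
  unfolding mdelete_path_transversal
  by (intro path_circular_path_transversal[OF assms(1)] path_circular_collection_subset[OF assms(2)]) auto

lemma path_circular_mcontract_transversal:
  fixes V P :: "nat set"
  assumes sg: "simple_graph V Adj" and pc: "path_circular_collection V Adj P pth" and e: "e \<in> P"
  shows "path_circular (mcontract (path_transversal V P pth) e)"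
proof (cases "pth e = []")
  case True
  then have "\<not> indep (path_transversal V P pth) {e}"
    unfolding indep_path_transversal is_sdr_def by simp
  then have "mcontract (path_transversal V P pth) e = mdelete (path_transversal V P pth) e"
    unfolding mcontract_def mdelete_def by simp
  then show ?thesis using path_circular_mdelete_transversal[OF sg pc] by simp
next
  case False
  interpret path_contraction V Adj P pth e
    using sg pc e False by unfold_locales
  show ?thesis
    unfolding mcontract_path_transversal
    using simple_graph_contracted path_circular_collection_subset[OF path_circular_collection_contracted]
    by (intro path_circular_path_transversal) auto
qed

theorem theorem1p3:
  fixes M :: "'a matroid" and e :: 'a
  assumes "path_circular M" and "e \<in> ground M"
  shows "path_circular (mdelete M e) \<and> path_circular (mcontract M e)"
proof -
  obtain V P :: "nat set" and Adj pth f where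
    sg: "simple_graph V Adj" and pc: "path_circular_collection V Adj P pth"
    and bij: "bij_betw f (ground M) (ground (path_transversal V P pth))"
    and ind: "\<And>X. indep M X \<longleftrightarrow> X \<subseteq> ground M \<and> indep (path_transversal V P pth) (f ` X)"
    using assms(1) unfolding path_circular_def matroid_iso_def by blast
  have "f e \<in> P" using bij_betw_apply[OF bij assms(2)] by (simp add: ground_path_transversal)
  then show ?thesis
    using matroid_iso_minors[OF bij ind assms(2)] path_circular_iso
      path_circular_mdelete_transversal[OF sg pc] path_circular_mcontract_transversal[OF sg pc]
    by blast
qed

end
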